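(* Let $\mathsf{M}_{\rho_0}[\boldsymbol{\alpha}]\triangleq\mathbb{E}_{\rho_0(\mathbf{x})}[\boldsymbol{\alpha}(\mathbf{x})\boldsymbol{\alpha}(\mathbf{x})^\intercal]$ and $\mathsf{M}_{\rho_1}[\boldsymbol{\beta}]\triangleq\mathbb{E}_{\rho_1(\mathbf{x}')}[\boldsymbol{\beta}(\mathbf{x}')\boldsymbol{\beta}(\mathbf{x}')^\intercal]$ (assumed invertible), and define $\mathsf{S}^{\mathsf{sqrt}}_{\rho_0,\rho_1}[\boldsymbol{\alpha},\boldsymbol{\beta}]\triangleq (\mathsf{M}_{\rho_0}[\boldsymbol{\alpha}])^{1/2}(\mathsf{M}_{\rho_1}[\boldsymbol{\beta}])^{1/2}$. Then this matrix shares the same spectrum as the kernel $k$: there exist matrices $\mathsf{U},\mathsf{V}$ with orthonormal columns and $\Sigma=\mathsf{diag}(\sigma_1,\ldots,\sigma_r)$ such that $\mathsf{S}^{\mathsf{sqrt}}_{\rho_0,\rho_1}[\boldsymbol{\alpha},\boldsymbol{\beta}]=\mathsf{U}\Sigma\mathsf{V}^\intercal=\sum_{i=1}^r\sigma_i\mathbf{u}_i\mathbf{v}_i^\intercal$, where $\sigma_i$ are the singular values in the SVD $k(\mathbf{x},\mathbf{x}')=\sum_{i=1}^r\sigma_i\phi_i(\mathbf{x})\psi_i(\mathbf{x}')$. Moreover, the ordered, normalized singular functions of $k$ are given by $\boldsymbol{\phi}(\mathbf{x})=\mathsf{U}^\intercal(\mathsf{M}_{\rho_0}[\boldsymbol{\alpha}])^{-1/2}\boldsymbol{\alpha}(\mathbf{x})$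 and $\boldsymbol{\psi}(\mathbf{x}')=\mathsf{V}^\intercal(\mathsf{M}_{\rho_1}[\boldsymbol{\beta}])^{-1/2}\boldsymbol{\beta}(\mathbf{x}')$; i.e., $\mathbb{E}_{\rho_0}[\boldsymbol{\phi}\boldsymbol{\phi}^\intercal]=\mathbb{E}_{\rho_1}[\boldsymbol{\psi}\boldsymbol{\psi}^\intercal]=\mathsf{I}$, $k(\mathbf{x},\mathbf{x}')=\boldsymbol{\phi}(\mathbf{x})^\intercal\Sigma\boldsymbol{\psi}(\mathbf{x}')$, $(\mathcal{K}^*\phi_i)=\sigma_i\psi_i$ and $(\mathcal{K}\psi_i)=\sigma_i\phi_i$.
   Context: Let $\mathcal{X}\subseteq\mathbb{R}^d$, let $p(\mathbf{x}'|\mathbf{x})$ be the transition density of a time-homogeneous Markov process, and let $\rho_0,\rho_1$ be the distributions of the current and future states. The Koopman operator $\mathcal{K}\colon L^2_{\rho_1}(\mathcal{X})\to L^2_{\rho_0}(\mathcal{X})$ is the integral operator $(\mathcal{K}g)(\mathbf{x})=\int k(\mathbf{x},\mathbf{x}')g(\mathbf{x}')\rho_1(\mathbf{x}')d\mathbf{x}'=\mathbb{E}_{p(\mathbf{x}'|\mathbf{x})}[g(\mathbf{x}')]$ with kernel $k(\mathbf{x},\mathbf{x}')\triangleq p(\mathbf{x}'|\mathbf{x})/\rho_1(\mathbf{x}')$; its adjoint is $(\mathcal{K}^*f)(\mathbf{x}')=\int k(\mathbf{x},\mathbf{x}')f(\mathbf{x})\rho_0(\mathbf{x})d\mathbf{x}$.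 Assume the operator has finite rank with factorized kernel $k(\mathbf{x},\mathbf{x}')=\boldsymbol{\alpha}(\mathbf{x})^\intercal\boldsymbol{\beta}(\mathbf{x}')=\sum_{i=1}^r\alpha_i(\mathbf{x})\beta_i(\mathbf{x}')$, and SVD $k(\mathbf{x},\mathbf{x}')=\sum_{i=1}^r\sigma_i\phi_i(\mathbf{x})\psi_i(\mathbf{x}')$ with $\langle\phi_i,\phi_j\rangle_{\rho_0}=\langle\psi_i,\psi_j\rangle_{\rho_1}=\delta_{ij}$ and $1=\sigma_1\ge\sigma_2\ge\cdots\ge\sigma_r\ge0$. *)

theory Defs
  imports "HOL-Probability.Probability" "Jordan_Normal_Form.Matrix"
begin

definition psd_mat :: "nat \<Rightarrow> real mat \<Rightarrow> bool" where
  "psd_mat n A \<longleftrightarrow> A \<in> carrier_mat n n \<and> transpose_mat A = A \<and>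
     (\<forall>v \<in> carrier_vec n. 0 \<le> v \<bullet> (A *\<^sub>v v))"

definition mat_sqrt :: "real mat \<Rightarrow> real mat" where
  "mat_sqrt A = (THE B. psd_mat (dim_row A) B \<and> B * B = A)"

definition mat_inv :: "real mat \<Rightarrow> real mat" where
  "mat_inv A = (THE B. B \<in> carrier_mat (dim_row A) (dim_row A) \<and> A * B = 1\<^sub>m (dim_row A))"

definition mat_inv_sqrt :: "real mat \<Rightarrow> real mat" where
  "mat_inv_sqrt A = mat_inv (mat_sqrt A)"

definition second_moment :: "'a measure \<Rightarrow> nat \<Rightarrow> ('a \<Rightarrow> real vec) \<Rightarrow> real mat" where
  "second_moment \<rho> r f = mat r r (\<lambda>(i, j). \<integral>x. f x $ i * f x $ j \<partial>\<rho>)"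

definition S_sqrt :: "'a measure \<Rightarrow> 'a measure \<Rightarrow> nat \<Rightarrow> ('a \<Rightarrow> real vec) \<Rightarrow> ('a \<Rightarrow> real vec) \<Rightarrow> real mat" where
  "S_sqrt \<rho>0 \<rho>1 r \<alpha> \<beta> = mat_sqrt (second_moment \<rho>0 r \<alpha>) * mat_sqrt (second_moment \<rho>1 r \<beta>)"

definition koopman :: "'a measure \<Rightarrow> ('a \<Rightarrow> 'a \<Rightarrow> real) \<Rightarrow> ('a \<Rightarrow> real) \<Rightarrow> 'a \<Rightarrow> real" where
  "koopman \<rho>1 k g x = (\<integral>x'. k x x' * g x' \<partial>\<rho>1)"

definition koopman_adj :: "'a measure \<Rightarrow> ('a \<Rightarrow> 'a \<Rightarrow> real) \<Rightarrow> ('a \<Rightarrow> real) \<Rightarrow> 'a \<Rightarrow> real" where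
  "koopman_adj \<rho>0 k f x' = (\<integral>x. k x x' * f x \<partial>\<rho>0)"

end

(* Testing the kernel identity alpha(x)^T beta(x') = phi(x)^T Sigma psi(x') against beta in
   L^2(rho1) shows, because M1 = M_rho1[beta] is invertible, that alpha = C phi for a square
   matrix C; symmetrically beta = D psi.  Orthonormality of the singular functions then gives
   M0 = C C^T, M1 = D D^T and C^T D = Sigma.  In the polar decompositions C = M0^(1/2) U and
   D = M1^(1/2) V the factors U = M0^(-1/2) C and V = M1^(-1/2) D are orthogonal, hence
   M0^(1/2) M1^(1/2) = U (C^T D) V^T = U Sigma V^T, and U^T M0^(-1/2) alpha = U^T U phi = phi
   recovers the given singular functions, for which the Koopman identities are immediate.
   Matrix square roots exist and are unique by the spectral theorem for real symmetric
   matrices, proved by deflation with Householder reflections. *)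

theory Submission
  imports Defs "Jordan_Normal_Form.Spectral_Radius"
begin

lemma index_mult_mat_vec_sum:
  assumes "A \<in> carrier_mat n m" "v \<in> carrier_vec m" "i < n"
  shows "vec_index (A *\<^sub>v v) i = (\<Sum>j<m. A $$ (i, j) * vec_index v j)"
  using assms by (auto simp: scalar_prod_def lessThan_atLeast0 intro!: sum.cong)

lemma dim_mat_diag [simp]:
  "dim_row (mat_diag n d) = n" "dim_col (mat_diag n d) = n"
  by (simp_all add: mat_diag_def)

lemma mat_diag_transpose: "(mat_diag n d)\<^sup>T = mat_diag n d"
  by (rule eq_matI) (auto simp: mat_diag_def)

lemma mat_diag_mult_vec:
  assumes "v \<in> carrier_vec n"
  shows "mat_diag n d *\<^sub>v v = vec n (\<lambda>i. d i * vec_index v i)"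
proof (rule eq_vecI)
  fix i assume "i < dim_vec (vec n (\<lambda>i. d i * vec_index v i))"
  then have "vec_index (mat_diag n d *\<^sub>v v) i = (\<Sum>j\<in>{0..<n}. (if i = j then d j else 0) * vec_index v j)"
    using assms by (simp add: mat_diag_def scalar_prod_def)
  also have "\<dots> = (\<Sum>j\<in>{0..<n}. if j = i then d i * vec_index v i else 0)"
    by (rule sum.cong) auto
  finally show "vec_index (mat_diag n d *\<^sub>v v) i = vec_index (vec n (\<lambda>i. d i * vec_index v i)) i"
    using \<open>i < _\<close> by simp
qed (simp add: mat_diag_def)

lemma mat_diag_mult_unit_vec:
  assumes "i < n"
  shows "mat_diag n d *\<^sub>v unit_vec n i = d i \<cdot>\<^sub>v unit_vec n i"
  using assms by (auto intro!: eq_vecI simp: mat_diag_mult_vec)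

lemma mat_diag_Suc_four_block:
  "mat_diag (Suc m) (case_nat e d) = four_block_mat (mat 1 1 (\<lambda>_. e)) (0\<^sub>m 1 m) (0\<^sub>m m 1) (mat_diag m d)"
  by (rule eq_matI) (auto simp: mat_diag_def split: nat.split)

lemma transpose_four_block_diagonal:
  assumes "A \<in> carrier_mat k k" "P \<in> carrier_mat m m"
  shows "(four_block_mat A (0\<^sub>m k m) (0\<^sub>m m k) P)\<^sup>T = four_block_mat A\<^sup>T (0\<^sub>m k m) (0\<^sub>m m k) P\<^sup>T"
  using assms by (subst transpose_four_block_mat) auto

lemma mult_four_block_diagonal:
  assumes "A \<in> carrier_mat k k" "B \<in> carrier_mat k k" "P \<in> carrier_mat m m" "Q \<in> carrier_mat m m"
  shows "four_block_mat A (0\<^sub>m k m) (0\<^sub>m m k) P * four_block_mat B (0\<^sub>m k m) (0\<^sub>m m k) Q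
    = four_block_mat (A * B) (0\<^sub>m k m) (0\<^sub>m m k) (P * Q)"
  using assms by (subst mult_four_block_mat[of _ k k _ m _ m _ _ k _ m]) auto

lemma scalar_prod_mult_mat_vec_transpose:
  fixes S :: "'a :: comm_semiring_0 mat"
  assumes "S \<in> carrier_mat n m" "x \<in> carrier_vec n" "y \<in> carrier_vec m"
  shows "x \<bullet> (S *\<^sub>v y) = y \<bullet> (S\<^sup>T *\<^sub>v x)"
  using transpose_vec_mult_scalar[OF assms(1,3,2)] assms by (simp add: comm_scalar_prod[of _ m])

lemma transpose_congruence:
  fixes A H :: "'a :: comm_semiring_0 mat"
  assumes "A \<in> carrier_mat n n" "H \<in> carrier_mat n m"
  shows "(H\<^sup>T * A * H)\<^sup>T = H\<^sup>T * A\<^sup>T * H"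
proof -
  have "(H\<^sup>T * A * H)\<^sup>T = H\<^sup>T * (H\<^sup>T * A)\<^sup>T"
    using assms by (intro transpose_mult) auto
  also have "(H\<^sup>T * A)\<^sup>T = A\<^sup>T * H"
    using assms by (simp add: transpose_mult[of "H\<^sup>T" m n A n])
  finally show ?thesis
    using assms by (simp add: assoc_mult_mat[of _ m n _ n _ m])
qed

lemma congruence_mult:
  fixes P Q D :: "'a :: comm_semiring_1 mat"
  assumes P: "P \<in> carrier_mat n n" and Q: "Q \<in> carrier_mat n n" and D: "D \<in> carrier_mat n n"
  shows "P * (Q * D * Q\<^sup>T) * P\<^sup>T = (P * Q) * D * (P * Q)\<^sup>T"
proof -
  have "Q * D * Q\<^sup>T \<in> carrier_mat n n" "D * Q\<^sup>T \<in> carrier_mat n n" "D * (Q\<^sup>T * P\<^sup>T) \<in> carrier_mat n n"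
    using P Q D by auto
  then show ?thesis
    using P Q D by (simp add: transpose_mult[OF P Q] assoc_mult_mat[of _ n n _ n _ n])
qed

lemma mult_transpose_mult:
  fixes P Q :: "'a :: comm_semiring_1 mat"
  assumes "P \<in> carrier_mat n n" "Q \<in> carrier_mat n n"
  shows "(P * Q) * (P * Q)\<^sup>T = P * (Q * Q\<^sup>T) * P\<^sup>T"
  using assms by (simp add: transpose_mult[of P n n Q n] assoc_mult_mat[of _ n n _ n _ n])

lemma invertible_matE:
  fixes A :: "'a :: semiring_1 mat"
  assumes "invertible_mat A" "A \<in> carrier_mat n n"
  obtains B where "B \<in> carrier_mat n n" "A * B = 1\<^sub>m n" "B * A = 1\<^sub>m n"
proof -
  obtain B where AB: "A * B = 1\<^sub>m n" and BA: "B * A = 1\<^sub>m (dim_row B)"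
    using assms unfolding invertible_mat_def inverts_mat_def by auto
  have "dim_row B = n"
    using arg_cong[OF BA, of dim_col] assms(2) by simp
  moreover have "dim_col B = n"
    using arg_cong[OF AB, of dim_col] by simp
  ultimately have "B \<in> carrier_mat n n"
    by (intro carrier_matI)
  then show thesis
    using that AB BA by simp
qed

lemma mat_inv_eqI:
  fixes R Z :: "real mat"
  assumes R: "R \<in> carrier_mat n n" and Z: "Z \<in> carrier_mat n n" and RZ: "R * Z = 1\<^sub>m n"
  shows "mat_inv R = Z"
proof -
  have ZR: "Z * R = 1\<^sub>m n"
    by (rule mat_mult_left_right_inverse[OF R Z RZ])
  have dim: "dim_row R = n"
    using R by simp
  show ?thesis
    unfolding mat_inv_def dim
  proof (rule the_equality)
    show "Z \<in> carrier_mat n n \<and> R * Z = 1\<^sub>m n"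
      using Z RZ by simp
    fix B assume "B \<in> carrier_mat n n \<and> R * B = 1\<^sub>m n"
    then have B: "B \<in> carrier_mat n n" and RB: "R * B = 1\<^sub>m n"
      by auto
    have "B = (Z * R) * B"
      using B by (simp add: ZR)
    also have "\<dots> = Z * (R * B)"
      using Z R B by (rule assoc_mult_mat)
    also have "\<dots> = Z"
      using Z by (simp add: RB)
    finally show "B = Z" .
  qed
qed

section \<open>Orthogonal matrices and Householder reflections\<close>

text \<open>Unlike \<^const>\<open>orthogonal_mat\<close> of the matrix library, which only asks for pairwise
  orthogonal columns, this notion requires orthonormal columns.\<close>

definition orthogonal_real_mat :: "nat \<Rightarrow> real mat \<Rightarrow> bool" where
  "orthogonal_real_mat n Q \<longleftrightarrow> Q \<in> carrier_mat n n \<and> Q\<^sup>T * Q = 1\<^sub>m n"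

lemma orthogonal_real_matD:
  assumes "orthogonal_real_mat n Q"
  shows "Q \<in> carrier_mat n n" "Q\<^sup>T * Q = 1\<^sub>m n" "Q * Q\<^sup>T = 1\<^sub>m n"
  using assms mat_mult_left_right_inverse[of "Q\<^sup>T" n Q]
  unfolding orthogonal_real_mat_def by auto

lemma orthogonal_real_mat_cancel:
  assumes "orthogonal_real_mat n Q" "B \<in> carrier_mat n k"
  shows "Q\<^sup>T * (Q * B) = B" "Q * (Q\<^sup>T * B) = B"
  using assms orthogonal_real_matD[OF assms(1)]
  by (simp_all add: assoc_mult_mat[of _ n n _ n _ k, symmetric])

lemma orthogonal_real_mat_congruence_cancel:
  assumes P: "orthogonal_real_mat n P" and Q: "orthogonal_real_mat n Q" and A: "A \<in> carrier_mat n n"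
  shows "P * (P\<^sup>T * A * Q) * Q\<^sup>T = A"
  using A orthogonal_real_matD[OF P] orthogonal_real_matD[OF Q]
  by (simp add: assoc_mult_mat[of _ n n _ n _ n] orthogonal_real_mat_cancel(2)[OF P, of _ n])

lemma orthogonal_real_mat_mult:
  assumes "orthogonal_real_mat n P" "orthogonal_real_mat n Q"
  shows "orthogonal_real_mat n (P * Q)"
proof -
  have P: "P \<in> carrier_mat n n" and Q: "Q \<in> carrier_mat n n"
    using assms by (auto dest: orthogonal_real_matD)
  have "(P * Q)\<^sup>T * (P * Q) = Q\<^sup>T * (P\<^sup>T * (P * Q))"
    using P Q by (simp add: transpose_mult[OF P Q] assoc_mult_mat[of _ n n _ n _ n])
  also have "\<dots> = 1\<^sub>m n"
    using assms Q by (simp add: orthogonal_real_mat_cancel(1)[OF assms(1) Q] orthogonal_real_matD)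
  finally show ?thesis
    using P Q unfolding orthogonal_real_mat_def by simp
qed

lemma orthogonal_real_mat_four_block:
  assumes Q: "orthogonal_real_mat m Q"
  shows "orthogonal_real_mat (Suc m) (four_block_mat (1\<^sub>m 1) (0\<^sub>m 1 m) (0\<^sub>m m 1) Q)"
  using orthogonal_real_matD[OF Q]
  by (auto simp: orthogonal_real_mat_def transpose_four_block_diagonal mult_four_block_diagonal)

lemma orthogonal_congruence_mult:
  assumes Q: "orthogonal_real_mat n Q" and A: "A \<in> carrier_mat n n" and B: "B \<in> carrier_mat n n"
  shows "(Q * A * Q\<^sup>T) * (Q * B * Q\<^sup>T) = Q * (A * B) * Q\<^sup>T"
  using orthogonal_real_matD(1)[OF Q] A B
  by (simp add: assoc_mult_mat[of _ n n _ n _ n] orthogonal_real_mat_cancel(1)[OF Q, of _ n])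

lemma orthogonal_congruence_eigenvector:
  fixes Q :: "real mat"
  assumes Q: "orthogonal_real_mat n Q" and A: "A = Q * mat_diag n d * Q\<^sup>T" and i: "i < n"
  shows "A *\<^sub>v (Q *\<^sub>v unit_vec n i) = d i \<cdot>\<^sub>v (Q *\<^sub>v unit_vec n i)"
    and "(Q *\<^sub>v unit_vec n i) \<bullet> (Q *\<^sub>v unit_vec n i) = 1"
proof -
  have Qc: "Q \<in> carrier_mat n n" and QQ: "Q\<^sup>T * Q = 1\<^sub>m n"
    using orthogonal_real_matD[OF Q] by auto
  have QQe: "Q\<^sup>T *\<^sub>v (Q *\<^sub>v unit_vec n i) = unit_vec n i"
    using Qc QQ by (simp flip: assoc_mult_mat_vec[of _ n n _ n])
  show "A *\<^sub>v (Q *\<^sub>v unit_vec n i) = d i \<cdot>\<^sub>v (Q *\<^sub>v unit_vec n i)"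
    using Qc i unfolding A by (simp add: assoc_mult_mat_vec[of _ n n _ n] QQe mat_diag_mult_unit_vec mult_mat_vec)
  have "(Q *\<^sub>v unit_vec n i) \<bullet> (Q *\<^sub>v unit_vec n i) = (Q\<^sup>T *\<^sub>v (Q *\<^sub>v unit_vec n i)) \<bullet> unit_vec n i"
    using transpose_vec_mult_scalar[of Q n n "unit_vec n i" "Q *\<^sub>v unit_vec n i"] Qc by simp
  then show "(Q *\<^sub>v unit_vec n i) \<bullet> (Q *\<^sub>v unit_vec n i) = 1"
    using i by (simp add: QQe)
qed

definition householder_mat :: "nat \<Rightarrow> real vec \<Rightarrow> real mat" where
  "householder_mat n u = mat n n (\<lambda>(i, j). (if i = j then 1 else 0) - 2 / (u \<bullet> u) * vec_index u i * vec_index u j)"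

lemma householder_mat_mult_vec:
  assumes u: "u \<in> carrier_vec n" and x: "x \<in> carrier_vec n"
  shows "householder_mat n u *\<^sub>v x = x - (2 / (u \<bullet> u) * (u \<bullet> x)) \<cdot>\<^sub>v u"
proof (rule eq_vecI)
  define a where "a = 2 / (u \<bullet> u)"
  have ux: "u \<bullet> x = (\<Sum>j<n. vec_index u j * vec_index x j)"
    using x by (simp add: scalar_prod_def lessThan_atLeast0)
  fix i assume "i < dim_vec (x - (2 / (u \<bullet> u) * (u \<bullet> x)) \<cdot>\<^sub>v u)"
  then have i: "i < n"
    using u by simp
  have "vec_index (householder_mat n u *\<^sub>v x) i
      = (\<Sum>j<n. (if i = j then vec_index x j else 0) - a * vec_index u i * (vec_index u j * vec_index x j))"
    unfolding householder_mat_def a_def[symmetric]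
    using i x by (auto simp: scalar_prod_def lessThan_atLeast0 algebra_simps intro!: sum.cong)
  also have "\<dots> = vec_index x i - a * vec_index u i * (u \<bullet> x)"
    using i by (simp add: sum_subtractf sum_distrib_left[symmetric] ux)
  finally show "vec_index (householder_mat n u *\<^sub>v x) i = vec_index (x - (2 / (u \<bullet> u) * (u \<bullet> x)) \<cdot>\<^sub>v u) i"
    using i u x by (simp add: a_def)
qed (use u x in \<open>simp add: householder_mat_def\<close>)

lemma householder_mat_orthogonal:
  assumes u: "u \<in> carrier_vec n" "u \<noteq> 0\<^sub>v n"
  shows "orthogonal_real_mat n (householder_mat n u)"
proof -
  define H where "H = householder_mat n u"
  define c where "c = u \<bullet> u"
  define a where "a = 2 / c"
  have c_sum: "(\<Sum>k<n. vec_index u k * vec_index u k) = c"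
    using u by (simp add: c_def scalar_prod_def lessThan_atLeast0)
  have "0 < c"
    using conjugate_square_greater_0_vec[OF u(1)] u(2) by (simp add: c_def)
  then have a: "a * a * c = 2 * a"
    by (simp add: a_def)
  have H: "H \<in> carrier_mat n n"
    by (simp add: H_def householder_mat_def)
  have "H\<^sup>T * H = 1\<^sub>m n"
  proof (rule eq_matI)
    fix i j assume "i < dim_row (1\<^sub>m n)" "j < dim_col (1\<^sub>m n)"
    then have i: "i < n" and j: "j < n" by auto
    have "(H\<^sup>T * H) $$ (i, j) = (\<Sum>k<n. H $$ (k, i) * H $$ (k, j))"
      using H i j by (auto simp: scalar_prod_def lessThan_atLeast0)
    also have "\<dots> = (\<Sum>k<n. (if k = i \<and> k = j then 1 else 0)
        - a * vec_index u i * (if k = i then vec_index u j else 0)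
        - a * vec_index u j * (if k = j then vec_index u i else 0)
        + (a * a) * (vec_index u i * vec_index u j) * (vec_index u k * vec_index u k))"
      unfolding H_def householder_mat_def c_def[symmetric] a_def[symmetric]
      by (rule sum.cong[OF refl]) (use i j in \<open>auto simp: algebra_simps\<close>)
    also have "\<dots> = (if i = j then 1 else 0) - 2 * a * (vec_index u i * vec_index u j)
        + (a * a * c) * (vec_index u i * vec_index u j)"
      using i j by (simp add: sum.distrib sum_subtractf sum_distrib_left[symmetric] c_sum)
    also have "\<dots> = 1\<^sub>m n $$ (i, j)"
      using i j by (simp add: a)
    finally show "(H\<^sup>T * H) $$ (i, j) = 1\<^sub>m n $$ (i, j)" .
  qed (use H in auto)
  then show ?thesis
    using H unfolding orthogonal_real_mat_def H_def by simp
qed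

lemma householder_reflection:
  fixes v :: "real vec"
  assumes v: "v \<in> carrier_vec n" and unit: "v \<bullet> v = 1" and n: "0 < n"
  obtains H where "orthogonal_real_mat n H" "H *\<^sub>v unit_vec n 0 = v"
proof (cases "v = unit_vec n 0")
  case True
  then show thesis
    using that[of "1\<^sub>m n"] by (auto simp: orthogonal_real_mat_def)
next
  case False
  let ?e = "unit_vec n 0"
  define u where "u = v - ?e"
  have e: "?e \<in> carrier_vec n" and u: "u \<in> carrier_vec n"
    using v by (simp_all add: u_def)
  have "u \<noteq> 0\<^sub>v n"
  proof
    assume "u = 0\<^sub>v n"
    then have "v = ?e"
      using v by (intro eq_vecI) (auto simp: u_def vec_eq_iff)
    with False show False ..
  qed
  have "u \<bullet> u = (v \<bullet> v - v \<bullet> ?e) - (?e \<bullet> v - ?e \<bullet> ?e)"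
    unfolding u_def using v e
    by (simp add: minus_scalar_prod_distrib[OF v e] scalar_prod_minus_distrib[OF v v e]
        scalar_prod_minus_distrib[OF e v e])
  also have "\<dots> = 2 * (1 - vec_index v 0)"
    using v n unit by simp
  finally have "2 / (u \<bullet> u) * (u \<bullet> ?e) = -1"
    using conjugate_square_greater_0_vec[OF u] \<open>u \<noteq> 0\<^sub>v n\<close> n v by (simp add: u_def field_simps)
  then have "householder_mat n u *\<^sub>v ?e = ?e - (-1) \<cdot>\<^sub>v u"
    by (simp add: householder_mat_mult_vec[OF u e])
  also have "\<dots> = v"
    using v by (intro eq_vecI) (auto simp: u_def)
  finally show thesis
    using that householder_mat_orthogonal[OF u \<open>u \<noteq> 0\<^sub>v n\<close>] by blast
qed

section \<open>Spectral theorem for real symmetric matrices\<close>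

lemma conjugate_of_real_mult_mat_vec:
  fixes A :: "real mat" and w :: "complex vec"
  assumes "A \<in> carrier_mat n m" "w \<in> carrier_vec m"
  shows "conjugate (map_mat of_real A *\<^sub>v w) = map_mat of_real A *\<^sub>v conjugate w"
  using assms by (intro eq_vecI) (auto simp: scalar_prod_def)

lemma real_symmetric_eigenvalue_real:
  fixes A :: "real mat"
  assumes A: "A \<in> carrier_mat n n" and sym: "A\<^sup>T = A"
    and w: "w \<in> carrier_vec n" "w \<noteq> 0\<^sub>v n" and Aw: "map_mat of_real A *\<^sub>v w = l \<cdot>\<^sub>v w"
  shows "Im l = 0"
proof -
  let ?A = "map_mat complex_of_real A"
  have A': "?A \<in> carrier_mat n n" and sym': "?A\<^sup>T = ?A"
    using A sym by (auto simp: map_mat_transpose)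
  have "l * (w \<bullet>c w) = (?A *\<^sub>v w) \<bullet>c w"
    using Aw w by simp
  also have "\<dots> = w \<bullet>c (?A *\<^sub>v w)"
    using transpose_vec_mult_scalar[OF A' carrier_vec_conjugate[OF w(1)] w(1)] sym'
    by (simp add: conjugate_of_real_mult_mat_vec[OF A w(1)])
  also have "\<dots> = cnj l * (w \<bullet>c w)"
    using Aw w by (simp add: conjugate_smult_vec)
  finally have "(l - cnj l) * (w \<bullet>c w) = 0"
    by (simp add: algebra_simps)
  moreover have "w \<bullet>c w \<noteq> 0"
    using w by simp
  ultimately have "cnj l = l"
    by simp
  then show ?thesis
    by (metis cnj.sel(2) neg_equal_zero)
qed

lemma map_vec_Re_of_real_mult_mat_vec:
  fixes A :: "real mat" and w :: "complex vec"
  assumes "A \<in> carrier_mat n m" "w \<in> carrier_vec m"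
  shows "map_vec Re (map_mat of_real A *\<^sub>v w) = A *\<^sub>v map_vec Re w"
    and "map_vec Im (map_mat of_real A *\<^sub>v w) = A *\<^sub>v map_vec Im w"
  using assms by (auto intro!: eq_vecI simp: scalar_prod_def Re_sum Im_sum)

lemma real_symmetric_has_eigenvector:
  fixes A :: "real mat"
  assumes A: "A \<in> carrier_mat n n" and sym: "A\<^sup>T = A" and n: "0 < n"
  obtains v e where "v \<in> carrier_vec n" "v \<noteq> 0\<^sub>v n" "A *\<^sub>v v = e \<cdot>\<^sub>v v"
proof -
  let ?A = "map_mat complex_of_real A"
  obtain l w where w: "w \<in> carrier_vec n" "w \<noteq> 0\<^sub>v n" and Aw: "?A *\<^sub>v w = l \<cdot>\<^sub>v w"
    using spectrum_non_empty[of ?A n] A n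
    unfolding spectrum_def eigenvalue_def eigenvector_def by auto
  have l: "Im l = 0"
    by (rule real_symmetric_eigenvalue_real[OF A sym w Aw])
  have "A *\<^sub>v map_vec Re w = map_vec Re (l \<cdot>\<^sub>v w)"
    using map_vec_Re_of_real_mult_mat_vec(1)[OF A w(1)] Aw by simp
  also have "\<dots> = Re l \<cdot>\<^sub>v map_vec Re w"
    using l by (auto intro!: eq_vecI)
  finally have Re_eigen: "A *\<^sub>v map_vec Re w = Re l \<cdot>\<^sub>v map_vec Re w" .
  have "A *\<^sub>v map_vec Im w = map_vec Im (l \<cdot>\<^sub>v w)"
    using map_vec_Re_of_real_mult_mat_vec(2)[OF A w(1)] Aw by simp
  also have "\<dots> = Re l \<cdot>\<^sub>v map_vec Im w"
    using l by (auto intro!: eq_vecI)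
  finally have Im_eigen: "A *\<^sub>v map_vec Im w = Re l \<cdot>\<^sub>v map_vec Im w" .
  have "map_vec Re w \<noteq> 0\<^sub>v n \<or> map_vec Im w \<noteq> 0\<^sub>v n"
    using w by (auto simp: vec_eq_iff complex_eq_iff)
  then show thesis
    using that[OF _ _ Re_eigen] that[OF _ _ Im_eigen] w(1) by auto
qed

lemma symmetric_eigen_unit_vec_four_block:
  fixes B :: "real mat"
  assumes B: "B \<in> carrier_mat (Suc m) (Suc m)" and sym: "B\<^sup>T = B"
    and eigen: "B *\<^sub>v unit_vec (Suc m) 0 = e \<cdot>\<^sub>v unit_vec (Suc m) 0"
  shows "B = four_block_mat (mat 1 1 (\<lambda>_. e)) (0\<^sub>m 1 m) (0\<^sub>m m 1) (mat m m (\<lambda>(i, j). B $$ (Suc i, Suc j)))"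
proof -
  have col0: "B $$ (i, 0) = (if i = 0 then e else 0)" if "i < Suc m" for i
  proof -
    have "B $$ (i, 0) = vec_index (B *\<^sub>v unit_vec (Suc m) 0) i"
      using B that by simp
    then show ?thesis
      unfolding eigen using that by simp
  qed
  have row0: "B $$ (0, j) = (if j = 0 then e else 0)" if "j < Suc m" for j
    using col0[OF that] sym B that by (metis carrier_matD index_transpose_mat(1) zero_less_Suc)
  show ?thesis
  proof (rule eq_matI)
    fix i j assume "i < dim_row (four_block_mat (mat 1 1 (\<lambda>_. e)) (0\<^sub>m 1 m) (0\<^sub>m m 1) (mat m m (\<lambda>(i, j). B $$ (Suc i, Suc j))))"
      "j < dim_col (four_block_mat (mat 1 1 (\<lambda>_. e)) (0\<^sub>m 1 m) (0\<^sub>m m 1) (mat m m (\<lambda>(i, j). B $$ (Suc i, Suc j))))"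
    then have "i < Suc m" "j < Suc m"
      by auto
    then show "B $$ (i, j) = four_block_mat (mat 1 1 (\<lambda>_. e)) (0\<^sub>m 1 m) (0\<^sub>m m 1) (mat m m (\<lambda>(i, j). B $$ (Suc i, Suc j))) $$ (i, j)"
      using col0 row0 by (cases i; cases j) auto
  qed (use B in auto)
qed

lemma symmetric_deflation:
  fixes A H :: "real mat"
  assumes A: "A \<in> carrier_mat (Suc m) (Suc m)" and sym: "A\<^sup>T = A"
    and H: "orthogonal_real_mat (Suc m) H"
    and eigen: "A *\<^sub>v (H *\<^sub>v unit_vec (Suc m) 0) = e \<cdot>\<^sub>v (H *\<^sub>v unit_vec (Suc m) 0)"
  obtains A' where "A' \<in> carrier_mat m m" "A'\<^sup>T = A'"
    "H\<^sup>T * A * H = four_block_mat (mat 1 1 (\<lambda>_. e)) (0\<^sub>m 1 m) (0\<^sub>m m 1) A'"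
proof -
  let ?n = "Suc m" and ?e0 = "unit_vec (Suc m) 0"
  define B where "B = H\<^sup>T * A * H"
  have Hc: "H \<in> carrier_mat ?n ?n" and HH: "H\<^sup>T * H = 1\<^sub>m ?n"
    using orthogonal_real_matD[OF H] by auto
  have B: "B \<in> carrier_mat ?n ?n"
    using A Hc by (simp add: B_def)
  have B_sym: "B\<^sup>T = B"
    unfolding B_def transpose_congruence[OF A Hc] sym ..
  have "B *\<^sub>v ?e0 = H\<^sup>T *\<^sub>v (A *\<^sub>v (H *\<^sub>v ?e0))"
    using A Hc by (simp add: B_def assoc_mult_mat_vec[of _ ?n ?n _ ?n])
  also have "\<dots> = e \<cdot>\<^sub>v ((H\<^sup>T * H) *\<^sub>v ?e0)"
    using Hc by (simp add: eigen mult_mat_vec)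
  finally have "B *\<^sub>v ?e0 = e \<cdot>\<^sub>v ?e0"
    using HH by simp
  note B_blocks = symmetric_eigen_unit_vec_four_block[OF B B_sym this]
  show thesis
  proof (rule that)
    show "mat m m (\<lambda>(i, j). B $$ (Suc i, Suc j)) \<in> carrier_mat m m"
      by simp
    show "(mat m m (\<lambda>(i, j). B $$ (Suc i, Suc j)))\<^sup>T = mat m m (\<lambda>(i, j). B $$ (Suc i, Suc j))"
      using B_sym B by (auto intro!: eq_matI) (metis Suc_less_eq carrier_matD index_transpose_mat(1))
    show "H\<^sup>T * A * H = four_block_mat (mat 1 1 (\<lambda>_. e)) (0\<^sub>m 1 m) (0\<^sub>m m 1) (mat m m (\<lambda>(i, j). B $$ (Suc i, Suc j)))"
      using B_blocks by (simp add: B_def)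
  qed
qed

theorem real_symmetric_spectral:
  fixes A :: "real mat"
  assumes "A \<in> carrier_mat n n" "A\<^sup>T = A"
  shows "\<exists>Q d. orthogonal_real_mat n Q \<and> A = Q * mat_diag n d * Q\<^sup>T"
  using assms
proof (induction n arbitrary: A)
  case 0
  then show ?case
    by (intro exI[of _ "1\<^sub>m 0"] exI[of _ "\<lambda>_. 0"]) (auto simp: orthogonal_real_mat_def)
next
  case (Suc m)
  let ?n = "Suc m"
  obtain v e where v: "v \<in> carrier_vec ?n" "v \<noteq> 0\<^sub>v ?n" and Av: "A *\<^sub>v v = e \<cdot>\<^sub>v v"
    using real_symmetric_has_eigenvector[OF Suc.prems] by blast
  define w where "w = (1 / sqrt (v \<bullet> v)) \<cdot>\<^sub>v v"
  have "0 < v \<bullet> v"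
    using conjugate_square_greater_0_vec[OF v(1)] v(2) by simp
  then have w: "w \<in> carrier_vec ?n" "w \<bullet> w = 1" and Aw: "A *\<^sub>v w = e \<cdot>\<^sub>v w"
    using v(1) Suc.prems(1) Av by (auto simp: w_def mult_mat_vec smult_smult_assoc power2_eq_square[symmetric])
  obtain H where H: "orthogonal_real_mat ?n H" and He: "H *\<^sub>v unit_vec ?n 0 = w"
    using householder_reflection[OF w] by auto
  obtain A' where A': "A' \<in> carrier_mat m m" "A'\<^sup>T = A'"
    and HAH: "H\<^sup>T * A * H = four_block_mat (mat 1 1 (\<lambda>_. e)) (0\<^sub>m 1 m) (0\<^sub>m m 1) A'"
    using symmetric_deflation[OF Suc.prems H] Aw He by metis
  obtain Q' d where Q': "orthogonal_real_mat m Q'" and A'_eq: "A' = Q' * mat_diag m d * Q'\<^sup>T"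
    using Suc.IH[OF A'] by blast
  define E where "E = four_block_mat (1\<^sub>m 1) (0\<^sub>m 1 m) (0\<^sub>m m 1) Q'"
  have E: "orthogonal_real_mat ?n E"
    unfolding E_def by (rule orthogonal_real_mat_four_block[OF Q'])
  have "H\<^sup>T * A * H = E * mat_diag ?n (case_nat e d) * E\<^sup>T"
    unfolding HAH A'_eq mat_diag_Suc_four_block E_def
    using orthogonal_real_matD(1)[OF Q']
    by (simp add: transpose_four_block_diagonal mult_four_block_diagonal)
  then have "A = H * (E * mat_diag ?n (case_nat e d) * E\<^sup>T) * H\<^sup>T"
    using orthogonal_real_mat_congruence_cancel[OF H H Suc.prems(1)] by simp
  also have "\<dots> = (H * E) * mat_diag ?n (case_nat e d) * (H * E)\<^sup>T"
    using orthogonal_real_matD(1)[OF H] orthogonal_real_matD(1)[OF E] by (rule congruence_mult) simp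
  finally show ?case
    using orthogonal_real_mat_mult[OF H E] by blast
qed

section \<open>Square roots of positive semidefinite matrices\<close>

lemma psd_matD:
  assumes "psd_mat n A"
  shows "A \<in> carrier_mat n n" "A\<^sup>T = A" "\<And>v. v \<in> carrier_vec n \<Longrightarrow> 0 \<le> v \<bullet> (A *\<^sub>v v)"
  using assms unfolding psd_mat_def by auto

lemma psd_mat_congruence_diag:
  fixes Q :: "real mat"
  assumes Q: "Q \<in> carrier_mat n n" and d: "\<And>i. i < n \<Longrightarrow> 0 \<le> d i"
  shows "psd_mat n (Q * mat_diag n d * Q\<^sup>T)"
  unfolding psd_mat_def
proof (intro conjI ballI)
  show "Q * mat_diag n d * Q\<^sup>T \<in> carrier_mat n n"
    using Q by (metis mat_diag_dim mult_carrier_mat transpose_carrier_mat)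
  show "(Q * mat_diag n d * Q\<^sup>T)\<^sup>T = Q * mat_diag n d * Q\<^sup>T"
    using transpose_congruence[of "mat_diag n d" n "Q\<^sup>T" n] Q
    by (simp add: mat_diag_transpose)
  fix v :: "real vec" assume v: "v \<in> carrier_vec n"
  define w where "w = Q\<^sup>T *\<^sub>v v"
  have w: "w \<in> carrier_vec n"
    using Q v by (simp add: w_def)
  have "Q * mat_diag n d * Q\<^sup>T *\<^sub>v v = Q *\<^sub>v (mat_diag n d *\<^sub>v w)"
    using Q v by (simp add: w_def assoc_mult_mat_vec[of _ n n _ n])
  moreover have "mat_diag n d *\<^sub>v w \<in> carrier_vec n"
    using w by (simp add: mat_diag_mult_vec)
  ultimately have "v \<bullet> (Q * mat_diag n d * Q\<^sup>T *\<^sub>v v) = w \<bullet> (mat_diag n d *\<^sub>v w)"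
    using Q v transpose_vec_mult_scalar[of Q n n "mat_diag n d *\<^sub>v w" v] by (simp add: w_def)
  also have "\<dots> = (\<Sum>i<n. d i * (vec_index w i)\<^sup>2)"
    using w by (simp add: mat_diag_mult_vec scalar_prod_def lessThan_atLeast0 power2_eq_square ac_simps)
  also have "\<dots> \<ge> 0"
    using d by (intro sum_nonneg) simp
  finally show "0 \<le> v \<bullet> (Q * mat_diag n d * Q\<^sup>T *\<^sub>v v)" .
qed

lemma psd_mat_gram:
  fixes C :: "real mat"
  assumes C: "C \<in> carrier_mat n m"
  shows "psd_mat n (C * C\<^sup>T)"
  unfolding psd_mat_def
proof (intro conjI ballI)
  show "C * C\<^sup>T \<in> carrier_mat n n" "(C * C\<^sup>T)\<^sup>T = C * C\<^sup>T"
    using C by (auto simp: transpose_mult[of C n m])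
  fix v :: "real vec" assume v: "v \<in> carrier_vec n"
  have "v \<bullet> (C * C\<^sup>T *\<^sub>v v) = (C\<^sup>T *\<^sub>v v) \<bullet> (C\<^sup>T *\<^sub>v v)"
    using transpose_vec_mult_scalar[of C n m "C\<^sup>T *\<^sub>v v" v] C v by simp
  then show "0 \<le> v \<bullet> (C * C\<^sup>T *\<^sub>v v)"
    using conjugate_square_ge_0_vec[of "C\<^sup>T *\<^sub>v v"] by simp
qed

lemma psd_mat_eigenvalue_nonneg:
  assumes A: "psd_mat n A" and Q: "orthogonal_real_mat n Q"
    and A_eq: "A = Q * mat_diag n d * Q\<^sup>T" and i: "i < n"
  shows "0 \<le> d i"
proof -
  let ?q = "Q *\<^sub>v unit_vec n i"
  have "?q \<in> carrier_vec n"
    using orthogonal_real_matD(1)[OF Q] by simp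
  then have "0 \<le> ?q \<bullet> (A *\<^sub>v ?q)"
    using A unfolding psd_mat_def by blast
  also have "\<dots> = d i"
    using orthogonal_congruence_eigenvector[OF Q A_eq i] by simp
  finally show ?thesis .
qed

lemma psd_mat_sqrt_exists:
  assumes A: "psd_mat n A"
  obtains B where "psd_mat n B" "B * B = A"
proof -
  obtain Q d where Q: "orthogonal_real_mat n Q" and A_eq: "A = Q * mat_diag n d * Q\<^sup>T"
    using real_symmetric_spectral[of A n] A unfolding psd_mat_def by blast
  have d: "0 \<le> d i" if "i < n" for i
    by (rule psd_mat_eigenvalue_nonneg[OF A Q A_eq that])
  let ?B = "Q * mat_diag n (\<lambda>i. sqrt (d i)) * Q\<^sup>T"
  have "psd_mat n ?B"
    using orthogonal_real_matD(1)[OF Q] by (rule psd_mat_congruence_diag) (use d in simp)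
  moreover have "mat_diag n (\<lambda>i. sqrt (d i) * sqrt (d i)) = mat_diag n d"
    using d by (auto intro!: eq_matI simp: mat_diag_def)
  then have "?B * ?B = A"
    unfolding A_eq orthogonal_congruence_mult[OF Q mat_diag_dim mat_diag_dim] by simp
  ultimately show thesis
    using that by blast
qed

lemma psd_mat_quadratic_form_zero:
  assumes B: "psd_mat n B" and q: "q \<in> carrier_vec n" and zero: "q \<bullet> (B *\<^sub>v q) = 0"
  shows "B *\<^sub>v q = 0\<^sub>v n"
proof -
  obtain R where R: "psd_mat n R" and RR: "R * R = B"
    using psd_mat_sqrt_exists[OF B] by blast
  have Rc: "R \<in> carrier_mat n n" and R_sym: "R\<^sup>T = R"
    using psd_matD[OF R] by auto
  have "q \<bullet> (B *\<^sub>v q) = (R *\<^sub>v q) \<bullet> (R *\<^sub>v q)"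
    using transpose_vec_mult_scalar[of R n n "R *\<^sub>v q" q] Rc q R_sym
    by (simp flip: RR add: assoc_mult_mat_vec[of _ n n _ n])
  then have "R *\<^sub>v q = 0\<^sub>v n"
    using zero conjugate_square_greater_0_vec[of "R *\<^sub>v q" n] Rc q by fastforce
  then have "B *\<^sub>v q = R *\<^sub>v 0\<^sub>v n"
    using Rc q by (simp flip: RR add: assoc_mult_mat_vec[of _ n n _ n])
  also have "\<dots> = 0\<^sub>v n"
    using Rc by (auto intro!: eq_vecI)
  finally show ?thesis .
qed

text \<open>With \<open>D = B1 - B2\<close> one has \<open>B1 D + D B2 = B1 B1 - B2 B2 = 0\<close>; evaluating the
  quadratic form of this matrix at an eigenvector of the symmetric matrix \<open>D\<close> forces the
  eigenvalue to vanish.\<close>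

lemma psd_sqrt_difference_eigenvalue_zero:
  fixes B1 B2 :: "real mat"
  assumes P1: "psd_mat n B1" and P2: "psd_mat n B2" and sq: "B1 * B1 = B2 * B2"
    and q: "q \<in> carrier_vec n" "q \<noteq> 0\<^sub>v n" and eigen: "(B1 - B2) *\<^sub>v q = l \<cdot>\<^sub>v q"
  shows "l = 0"
proof (rule ccontr)
  assume l: "l \<noteq> 0"
  let ?D = "B1 - B2"
  have B1: "B1 \<in> carrier_mat n n" "B1\<^sup>T = B1" and B2: "B2 \<in> carrier_mat n n" "B2\<^sup>T = B2"
    using psd_matD[OF P1] psd_matD[OF P2] by auto
  have D: "?D \<in> carrier_mat n n" and D_sym: "?D\<^sup>T = ?D"
    using B1 B2 by (auto simp: transpose_minus)
  have "B1 * ?D + ?D * B2 = 0\<^sub>m n n"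
    using B1 B2 sq by (auto intro!: eq_matI simp: mult_minus_distrib_mat minus_mult_distrib_mat)
  moreover have "0\<^sub>m n n *\<^sub>v q = 0\<^sub>v n"
    using q by (auto intro!: eq_vecI)
  ultimately have "0 = q \<bullet> ((B1 * ?D + ?D * B2) *\<^sub>v q)"
    using q by simp
  also have "\<dots> = q \<bullet> (B1 *\<^sub>v (?D *\<^sub>v q)) + q \<bullet> (?D *\<^sub>v (B2 *\<^sub>v q))"
    using B1 B2 D q
    by (simp add: add_mult_distrib_mat_vec[of _ n n] scalar_prod_add_distrib[of _ n] assoc_mult_mat_vec[of _ n n _ n])
  also have "q \<bullet> (?D *\<^sub>v (B2 *\<^sub>v q)) = (?D *\<^sub>v q) \<bullet> (B2 *\<^sub>v q)"
    using transpose_vec_mult_scalar[of ?D n n "B2 *\<^sub>v q" q] B2 q D D_sym by simp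
  finally have "l * (q \<bullet> (B1 *\<^sub>v q) + q \<bullet> (B2 *\<^sub>v q)) = 0"
    using B1 B2 q by (simp add: eigen mult_mat_vec algebra_simps)
  then have "q \<bullet> (B1 *\<^sub>v q) + q \<bullet> (B2 *\<^sub>v q) = 0"
    using l by simp
  then have "q \<bullet> (B1 *\<^sub>v q) = 0" "q \<bullet> (B2 *\<^sub>v q) = 0"
    using psd_matD(3)[OF P1 q(1)] psd_matD(3)[OF P2 q(1)] by linarith+
  then have "?D *\<^sub>v q = 0\<^sub>v n"
    using psd_mat_quadratic_form_zero[OF P1 q(1)] psd_mat_quadratic_form_zero[OF P2 q(1)] B1 B2 q
    by (simp add: minus_mult_distrib_mat_vec)
  then have "l \<cdot>\<^sub>v q = 0\<^sub>v n"
    by (simp add: eigen)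
  with l q show False
    by (auto simp: vec_eq_iff)
qed

lemma psd_mat_sqrt_unique:
  fixes B1 B2 :: "real mat"
  assumes P1: "psd_mat n B1" and P2: "psd_mat n B2" and sq: "B1 * B1 = B2 * B2"
  shows "B1 = B2"
proof -
  have B1: "B1 \<in> carrier_mat n n" "B1\<^sup>T = B1" and B2: "B2 \<in> carrier_mat n n" "B2\<^sup>T = B2"
    using psd_matD[OF P1] psd_matD[OF P2] by auto
  then have "B1 - B2 \<in> carrier_mat n n" "(B1 - B2)\<^sup>T = B1 - B2"
    by (auto simp: transpose_minus)
  then obtain Q l where Q: "orthogonal_real_mat n Q" and D_eq: "B1 - B2 = Q * mat_diag n l * Q\<^sup>T"
    using real_symmetric_spectral by blast
  have "l i = 0" if i: "i < n" for i
  proof (rule psd_sqrt_difference_eigenvalue_zero[OF P1 P2 sq])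
    show "Q *\<^sub>v unit_vec n i \<in> carrier_vec n"
      using orthogonal_real_matD(1)[OF Q] by simp
    show "Q *\<^sub>v unit_vec n i \<noteq> 0\<^sub>v n"
      using orthogonal_congruence_eigenvector(2)[OF Q D_eq i] by auto
    show "(B1 - B2) *\<^sub>v (Q *\<^sub>v unit_vec n i) = l i \<cdot>\<^sub>v (Q *\<^sub>v unit_vec n i)"
      by (rule orthogonal_congruence_eigenvector(1)[OF Q D_eq i])
  qed
  then have "mat_diag n l = 0\<^sub>m n n"
    by (auto intro!: eq_matI simp: mat_diag_def)
  then have "B1 - B2 = 0\<^sub>m n n"
    using D_eq orthogonal_real_matD(1)[OF Q] by simp
  show ?thesis
  proof (rule eq_matI)
    fix i j assume ij: "i < dim_row B2" "j < dim_col B2"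
    then have "(B1 - B2) $$ (i, j) = 0"
      using B2 \<open>B1 - B2 = 0\<^sub>m n n\<close> by simp
    then show "B1 $$ (i, j) = B2 $$ (i, j)"
      using ij by simp
  qed (use B1 B2 in auto)
qed

lemma mat_sqrt_eqI:
  assumes "psd_mat n B"
  shows "mat_sqrt (B * B) = B"
proof -
  have dim: "dim_row (B * B) = n"
    using psd_matD(1)[OF assms] by simp
  show ?thesis
    unfolding mat_sqrt_def dim
  proof (rule the_equality)
    show "psd_mat n B \<and> B * B = B * B"
      using assms by simp
    show "X = B" if "psd_mat n X \<and> X * X = B * B" for X
      using that assms psd_mat_sqrt_unique by blast
  qed
qed

lemma mat_sqrt_psd_mat:
  assumes "psd_mat n A"
  shows "psd_mat n (mat_sqrt A)" "mat_sqrt A * mat_sqrt A = A"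
proof -
  obtain B where B: "psd_mat n B" and A: "B * B = A"
    using psd_mat_sqrt_exists[OF assms] by blast
  then have "mat_sqrt A = B"
    using mat_sqrt_eqI by blast
  then show "psd_mat n (mat_sqrt A)" "mat_sqrt A * mat_sqrt A = A"
    using B A by simp_all
qed

lemma polar_decomposition:
  fixes C :: "real mat"
  assumes C: "C \<in> carrier_mat n n" and inv: "invertible_mat (C * C\<^sup>T)"
  shows "mat_inv_sqrt (C * C\<^sup>T) \<in> carrier_mat n n"
    and "orthogonal_real_mat n (mat_inv_sqrt (C * C\<^sup>T) * C)"
    and "mat_sqrt (C * C\<^sup>T) * (mat_inv_sqrt (C * C\<^sup>T) * C) = C"
proof -
  let ?M = "C * C\<^sup>T"
  define R where "R = mat_sqrt ?M"
  have Ct: "C\<^sup>T \<in> carrier_mat n n"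
    using C by simp
  obtain Mi where Mi: "Mi \<in> carrier_mat n n" and M_Mi: "?M * Mi = 1\<^sub>m n"
    using invertible_matE[OF inv mult_carrier_mat[OF C Ct]] by blast
  have R: "psd_mat n R" and RR: "R * R = ?M"
    using mat_sqrt_psd_mat[OF psd_mat_gram[OF C]] by (simp_all add: R_def)
  have Rc: "R \<in> carrier_mat n n" and R_sym: "R\<^sup>T = R"
    using psd_matD[OF R] by auto
  define Z where "Z = R * Mi"
  have Zc: "Z \<in> carrier_mat n n"
    using Rc Mi by (simp add: Z_def)
  have RZ: "R * Z = 1\<^sub>m n"
    using Rc Mi M_Mi by (simp flip: RR add: Z_def assoc_mult_mat[of _ n n _ n _ n])
  have ZR: "Z * R = 1\<^sub>m n"
    by (rule mat_mult_left_right_inverse[OF Rc Zc RZ])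
  have Z_eq: "mat_inv_sqrt ?M = Z"
    unfolding mat_inv_sqrt_def R_def[symmetric] by (rule mat_inv_eqI[OF Rc Zc RZ])
  then show "mat_inv_sqrt ?M \<in> carrier_mat n n"
    using Zc by simp
  have "(Z * C) * (Z * C)\<^sup>T = Z * (R * R\<^sup>T) * Z\<^sup>T"
    unfolding mult_transpose_mult[OF Zc C] R_sym RR ..
  also have "\<dots> = 1\<^sub>m n"
    unfolding mult_transpose_mult[OF Zc Rc, symmetric] ZR by simp
  finally have "(Z * C) * (Z * C)\<^sup>T = 1\<^sub>m n" .
  moreover have ZC: "Z * C \<in> carrier_mat n n"
    using Zc C by simp
  ultimately have "(Z * C)\<^sup>T * (Z * C) = 1\<^sub>m n"
    using mat_mult_left_right_inverse[of "Z * C" n "(Z * C)\<^sup>T"] by simp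
  then show "orthogonal_real_mat n (mat_inv_sqrt ?M * C)"
    unfolding Z_eq orthogonal_real_mat_def using ZC by simp
  show "mat_sqrt ?M * (mat_inv_sqrt ?M * C) = C"
    unfolding Z_eq R_def[symmetric] using Rc Zc C by (simp flip: assoc_mult_mat[of _ n n _ n _ n] add: RZ)
qed

lemma polar_decomposition_coordinates:
  fixes C :: "real mat"
  assumes C: "C \<in> carrier_mat n n" and inv: "invertible_mat (C * C\<^sup>T)" and v: "v \<in> carrier_vec n"
  shows "(mat_inv_sqrt (C * C\<^sup>T) * C)\<^sup>T *\<^sub>v (mat_inv_sqrt (C * C\<^sup>T) *\<^sub>v (C *\<^sub>v v)) = v"
proof -
  let ?U = "mat_inv_sqrt (C * C\<^sup>T) * C"
  have U: "?U \<in> carrier_mat n n" "?U\<^sup>T * ?U = 1\<^sub>m n"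
    using orthogonal_real_matD[OF polar_decomposition(2)[OF C inv]] by auto
  have "mat_inv_sqrt (C * C\<^sup>T) *\<^sub>v (C *\<^sub>v v) = ?U *\<^sub>v v"
    using polar_decomposition(1)[OF C inv] C v by (rule assoc_mult_mat_vec[symmetric])
  also have "?U\<^sup>T *\<^sub>v (?U *\<^sub>v v) = (?U\<^sup>T * ?U) *\<^sub>v v"
    using U v by (intro assoc_mult_mat_vec[symmetric]) auto
  finally show ?thesis
    using U v by simp
qed

lemma mat_sqrt_gram_mult_svd:
  fixes C D :: "real mat"
  assumes C: "C \<in> carrier_mat n n" and D: "D \<in> carrier_mat n n"
    and inv_C: "invertible_mat (C * C\<^sup>T)" and inv_D: "invertible_mat (D * D\<^sup>T)"
  defines "U \<equiv> mat_inv_sqrt (C * C\<^sup>T) * C" and "V \<equiv> mat_inv_sqrt (D * D\<^sup>T) * D"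
  shows "mat_sqrt (C * C\<^sup>T) * mat_sqrt (D * D\<^sup>T) = U * (C\<^sup>T * D) * V\<^sup>T"
proof -
  let ?R0 = "mat_sqrt (C * C\<^sup>T)" and ?R1 = "mat_sqrt (D * D\<^sup>T)"
  have U: "orthogonal_real_mat n U" and V: "orthogonal_real_mat n V"
    using polar_decomposition(2) C D inv_C inv_D unfolding U_def V_def by blast+
  have C_eq: "C = ?R0 * U" and D_eq: "D = ?R1 * V"
    using polar_decomposition(3) C D inv_C inv_D unfolding U_def V_def by metis+
  have R0: "psd_mat n ?R0" and R1: "psd_mat n ?R1"
    using mat_sqrt_psd_mat(1) psd_mat_gram C D by blast+
  have R0c: "?R0 \<in> carrier_mat n n" and R0_sym: "?R0\<^sup>T = ?R0" and R1c: "?R1 \<in> carrier_mat n n"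
    using psd_matD[OF R0] psd_matD[OF R1] by auto
  have Uc: "U \<in> carrier_mat n n" and Vc: "V \<in> carrier_mat n n"
    using orthogonal_real_matD(1) U V by blast+
  have "C\<^sup>T * D = U\<^sup>T * (?R0 * ?R1) * V"
    using R0c R1c Uc Vc
    by (subst C_eq, subst D_eq) (simp add: transpose_mult[of _ n n _ n] R0_sym assoc_mult_mat[of _ n n _ n _ n])
  then show ?thesis
    using orthogonal_real_mat_congruence_cancel[OF U V, of "?R0 * ?R1"] R0c R1c by simp
qed

section \<open>Moment matrices of feature maps\<close>

definition cross_moment :: "'a measure \<Rightarrow> nat \<Rightarrow> ('a \<Rightarrow> real vec) \<Rightarrow> ('a \<Rightarrow> real vec) \<Rightarrow> real mat" where
  "cross_moment \<rho> r f g = mat r r (\<lambda>(i, j). \<integral>x. vec_index (f x) i * vec_index (g x) j \<partial>\<rho>)"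

definition square_integrable_features :: "'a measure \<Rightarrow> nat \<Rightarrow> ('a \<Rightarrow> real vec) \<Rightarrow> bool" where
  "square_integrable_features \<rho> r f \<longleftrightarrow> (\<forall>x\<in>space \<rho>. f x \<in> carrier_vec r) \<and>
     (\<forall>i<r. (\<lambda>x. vec_index (f x) i) \<in> borel_measurable \<rho> \<and> integrable \<rho> (\<lambda>x. (vec_index (f x) i)\<^sup>2))"

lemma cross_moment_carrier [simp]: "cross_moment \<rho> r f g \<in> carrier_mat r r"
  and dim_cross_moment [simp]: "dim_row (cross_moment \<rho> r f g) = r" "dim_col (cross_moment \<rho> r f g) = r"
  by (simp_all add: cross_moment_def)

lemma second_moment_eq_cross_moment: "second_moment \<rho> r f = cross_moment \<rho> r f f"
  by (simp add: second_moment_def cross_moment_def)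

lemma transpose_cross_moment: "(cross_moment \<rho> r f g)\<^sup>T = cross_moment \<rho> r g f"
  by (auto intro!: eq_matI simp: cross_moment_def mult.commute)

lemma second_moment_cong:
  "(\<And>x. x \<in> space \<rho> \<Longrightarrow> f x = g x) \<Longrightarrow> second_moment \<rho> r f = second_moment \<rho> r g"
  unfolding second_moment_def by (auto intro!: eq_matI Bochner_Integration.integral_cong)

lemma second_moment_orthonormal_vec:
  assumes "\<And>i j. i < r \<Longrightarrow> j < r \<Longrightarrow> (\<integral>x. \<phi> i x * \<phi> j x \<partial>\<rho>) = (if i = j then 1 else 0)"
  shows "second_moment \<rho> r (\<lambda>x. vec r (\<lambda>i. \<phi> i x)) = 1\<^sub>m r"
  using assms by (auto intro!: eq_matI simp: second_moment_def)

lemma integrable_mult_of_square_integrable: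
  fixes f g :: "'a \<Rightarrow> real"
  assumes "f \<in> borel_measurable M" "g \<in> borel_measurable M"
    and "integrable M (\<lambda>x. (f x)\<^sup>2)" "integrable M (\<lambda>x. (g x)\<^sup>2)"
  shows "integrable M (\<lambda>x. f x * g x)"
proof (rule Bochner_Integration.integrable_bound)
  show "integrable M (\<lambda>x. (f x)\<^sup>2 + (g x)\<^sup>2)"
    using assms by simp
  show "(\<lambda>x. f x * g x) \<in> borel_measurable M"
    using assms by simp
  have "\<bar>a * b\<bar> \<le> a\<^sup>2 + b\<^sup>2" for a b :: real
  proof -
    have "\<bar>a * b\<bar> \<le> 2 * \<bar>a\<bar> * \<bar>b\<bar>"
      by (simp add: abs_mult)
    also have "\<dots> \<le> \<bar>a\<bar>\<^sup>2 + \<bar>b\<bar>\<^sup>2"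
      by (rule sum_squares_bound)
    finally show ?thesis
      by simp
  qed
  then show "AE x in M. norm (f x * g x) \<le> norm ((f x)\<^sup>2 + (g x)\<^sup>2)"
    by (intro AE_I2) (simp add: abs_of_nonneg)
qed

lemma square_integrable_features_integrable:
  assumes "square_integrable_features \<rho> r f" "square_integrable_features \<rho> r g" "i < r" "j < r"
  shows "integrable \<rho> (\<lambda>x. vec_index (f x) i * vec_index (g x) j)"
  using assms unfolding square_integrable_features_def
  by (intro integrable_mult_of_square_integrable) simp_all

lemma square_integrable_features_vec:
  assumes "\<And>i. i < r \<Longrightarrow> \<phi> i \<in> borel_measurable \<rho>" "\<And>i. i < r \<Longrightarrow> integrable \<rho> (\<lambda>x. (\<phi> i x)\<^sup>2)"
  shows "square_integrable_features \<rho> r (\<lambda>x. vec r (\<lambda>i. \<phi> i x))"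
  using assms unfolding square_integrable_features_def by simp

lemma cross_moment_mult_vec:
  fixes f g :: "'a \<Rightarrow> real vec"
  assumes f: "square_integrable_features \<rho> r f" and g: "square_integrable_features \<rho> r g"
    and a: "a \<in> carrier_vec r"
  shows "cross_moment \<rho> r f g *\<^sub>v a = vec r (\<lambda>i. \<integral>x. vec_index (f x) i * (g x \<bullet> a) \<partial>\<rho>)"
proof (rule eq_vecI)
  fix i assume "i < dim_vec (vec r (\<lambda>i. \<integral>x. vec_index (f x) i * (g x \<bullet> a) \<partial>\<rho>))"
  then have i: "i < r" by simp
  have "vec_index (cross_moment \<rho> r f g *\<^sub>v a) i
      = (\<Sum>j<r. (\<integral>x. vec_index (f x) i * vec_index (g x) j \<partial>\<rho>) * vec_index a j)"
    using a i by (simp add: cross_moment_def scalar_prod_def lessThan_atLeast0)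
  also have "\<dots> = (\<integral>x. (\<Sum>j<r. vec_index (f x) i * vec_index (g x) j * vec_index a j) \<partial>\<rho>)"
    using square_integrable_features_integrable[OF f g i] by (simp add: Bochner_Integration.integral_sum)
  also have "\<dots> = (\<integral>x. vec_index (f x) i * (g x \<bullet> a) \<partial>\<rho>)"
    using g a unfolding square_integrable_features_def
    by (intro Bochner_Integration.integral_cong)
      (auto simp: scalar_prod_def lessThan_atLeast0 sum_distrib_left mult.assoc)
  finally show "vec_index (cross_moment \<rho> r f g *\<^sub>v a) i
      = vec_index (vec r (\<lambda>i. \<integral>x. vec_index (f x) i * (g x \<bullet> a) \<partial>\<rho>)) i"
    using i by simp
qed simp

lemma second_moment_mult_vec_eq:
  fixes \<beta> \<psi> :: "'a \<Rightarrow> real vec"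
  assumes \<beta>: "square_integrable_features \<rho> r \<beta>" and \<psi>: "square_integrable_features \<rho> r \<psi>"
    and a: "a \<in> carrier_vec r" and c: "c \<in> carrier_vec r"
    and eq: "\<And>y. y \<in> space \<rho> \<Longrightarrow> \<beta> y \<bullet> a = \<psi> y \<bullet> c"
  shows "second_moment \<rho> r \<beta> *\<^sub>v a = cross_moment \<rho> r \<beta> \<psi> *\<^sub>v c"
proof -
  have "(\<lambda>i. \<integral>y. vec_index (\<beta> y) i * (\<beta> y \<bullet> a) \<partial>\<rho>) = (\<lambda>i. \<integral>y. vec_index (\<beta> y) i * (\<psi> y \<bullet> c) \<partial>\<rho>)"
    using eq by (auto intro!: Bochner_Integration.integral_cong)
  then show ?thesis
    unfolding second_moment_eq_cross_moment cross_moment_mult_vec[OF \<beta> \<beta> a] cross_moment_mult_vec[OF \<beta> \<psi> c]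
    by simp
qed

lemma cross_moment_mult_mat_left:
  assumes g: "square_integrable_features \<rho> r g" and h: "square_integrable_features \<rho> r h"
    and N: "N \<in> carrier_mat r r" and f: "\<And>x. x \<in> space \<rho> \<Longrightarrow> f x = N *\<^sub>v g x"
  shows "cross_moment \<rho> r f h = N * cross_moment \<rho> r g h"
proof (rule eq_matI)
  fix i j assume "i < dim_row (N * cross_moment \<rho> r g h)" "j < dim_col (N * cross_moment \<rho> r g h)"
  then have i: "i < r" and j: "j < r"
    using N by auto
  have "vec_index (f x) i * vec_index (h x) j = (\<Sum>k<r. N $$ (i, k) * (vec_index (g x) k * vec_index (h x) j))"
    if "x \<in> space \<rho>" for x
  proof -
    have "g x \<in> carrier_vec r"
      using g that unfolding square_integrable_features_def by blast
    then show ?thesis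
      using that by (simp add: f index_mult_mat_vec_sum[OF N _ i] sum_distrib_right mult.assoc)
  qed
  then have "cross_moment \<rho> r f h $$ (i, j)
      = (\<integral>x. (\<Sum>k<r. N $$ (i, k) * (vec_index (g x) k * vec_index (h x) j)) \<partial>\<rho>)"
    unfolding cross_moment_def using i j by (simp cong: Bochner_Integration.integral_cong)
  also have "\<dots> = (\<Sum>k<r. N $$ (i, k) * cross_moment \<rho> r g h $$ (k, j))"
    using square_integrable_features_integrable[OF g h _ j] j
    by (simp add: Bochner_Integration.integral_sum cross_moment_def)
  also have "\<dots> = (N * cross_moment \<rho> r g h) $$ (i, j)"
    using N i j by (simp add: scalar_prod_def lessThan_atLeast0)
  finally show "cross_moment \<rho> r f h $$ (i, j) = (N * cross_moment \<rho> r g h) $$ (i, j)" .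
qed (use N in auto)

lemma feature_coefficients_from_kernel:
  fixes \<beta> \<psi> :: "'a \<Rightarrow> real vec"
  assumes \<beta>: "square_integrable_features \<rho> r \<beta>" and \<psi>: "square_integrable_features \<rho> r \<psi>"
    and Mi: "Mi \<in> carrier_mat r r" "Mi * second_moment \<rho> r \<beta> = 1\<^sub>m r"
    and S: "S \<in> carrier_mat r r" and a: "a \<in> carrier_vec r" and w: "w \<in> carrier_vec r"
    and kernel: "\<And>y. y \<in> space \<rho> \<Longrightarrow> \<beta> y \<bullet> a = \<psi> y \<bullet> (S *\<^sub>v w)"
  shows "a = (Mi * cross_moment \<rho> r \<beta> \<psi> * S) *\<^sub>v w"
proof -
  let ?M = "second_moment \<rho> r \<beta>"
  have M: "?M \<in> carrier_mat r r"
    by (simp add: second_moment_eq_cross_moment)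
  have "a = (Mi * ?M) *\<^sub>v a"
    using a by (simp add: Mi(2))
  also have "\<dots> = Mi *\<^sub>v (?M *\<^sub>v a)"
    using Mi(1) M a by (rule assoc_mult_mat_vec)
  also have "?M *\<^sub>v a = cross_moment \<rho> r \<beta> \<psi> *\<^sub>v (S *\<^sub>v w)"
    using S w by (intro second_moment_mult_vec_eq[OF \<beta> \<psi> a] kernel) auto
  also have "Mi *\<^sub>v (cross_moment \<rho> r \<beta> \<psi> *\<^sub>v (S *\<^sub>v w)) = (Mi * cross_moment \<rho> r \<beta> \<psi> * S) *\<^sub>v w"
    using Mi(1) S w by (simp add: assoc_mult_mat_vec[of _ r r _ r])
  finally show ?thesis .
qed

lemma feature_map_in_span:
  fixes \<beta> \<psi> :: "'a \<Rightarrow> real vec" and a w :: "'b \<Rightarrow> real vec"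
  assumes \<beta>: "square_integrable_features \<rho> r \<beta>" and \<psi>: "square_integrable_features \<rho> r \<psi>"
    and inv: "invertible_mat (second_moment \<rho> r \<beta>)" and S: "S \<in> carrier_mat r r"
    and a: "\<And>x. x \<in> A \<Longrightarrow> a x \<in> carrier_vec r" and w: "\<And>x. x \<in> A \<Longrightarrow> w x \<in> carrier_vec r"
    and kernel: "\<And>x y. x \<in> A \<Longrightarrow> y \<in> space \<rho> \<Longrightarrow> \<beta> y \<bullet> a x = \<psi> y \<bullet> (S *\<^sub>v w x)"
  obtains N where "N \<in> carrier_mat r r" "\<And>x. x \<in> A \<Longrightarrow> a x = N *\<^sub>v w x"
proof -
  have "second_moment \<rho> r \<beta> \<in> carrier_mat r r"
    by (simp add: second_moment_eq_cross_moment)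
  then obtain Mi where Mi: "Mi \<in> carrier_mat r r" "Mi * second_moment \<rho> r \<beta> = 1\<^sub>m r"
    using invertible_matE[OF inv] by blast
  show thesis
  proof (rule that)
    show "Mi * cross_moment \<rho> r \<beta> \<psi> * S \<in> carrier_mat r r"
      using Mi(1) S by (metis cross_moment_carrier mult_carrier_mat)
    show "a x = (Mi * cross_moment \<rho> r \<beta> \<psi> * S) *\<^sub>v w x" if "x \<in> A" for x
      using kernel that by (intro feature_coefficients_from_kernel[OF \<beta> \<psi> Mi S a w]) auto
  qed
qed

lemma second_moment_orthonormal_expansion:
  fixes \<alpha> \<phi> :: "'a \<Rightarrow> real vec"
  assumes \<alpha>: "square_integrable_features \<rho> r \<alpha>" and \<phi>: "square_integrable_features \<rho> r \<phi>"
    and orth: "second_moment \<rho> r \<phi> = 1\<^sub>m r"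
    and C: "C \<in> carrier_mat r r" and \<alpha>_eq: "\<And>x. x \<in> space \<rho> \<Longrightarrow> \<alpha> x = C *\<^sub>v \<phi> x"
  shows "second_moment \<rho> r \<alpha> = C * C\<^sup>T"
proof -
  have "cross_moment \<rho> r \<alpha> \<phi> = C"
    using cross_moment_mult_mat_left[OF \<phi> \<phi> C \<alpha>_eq] C orth by (simp add: second_moment_eq_cross_moment)
  then show ?thesis
    using cross_moment_mult_mat_left[OF \<phi> \<alpha> C \<alpha>_eq] transpose_cross_moment[of \<rho> r \<alpha> \<phi>]
    by (simp add: second_moment_eq_cross_moment)
qed

lemma orthonormal_features_bilinear_unique:
  fixes \<phi> \<psi> :: "'a \<Rightarrow> real vec"
  assumes \<phi>: "square_integrable_features \<rho>0 r \<phi>" and \<psi>: "square_integrable_features \<rho>1 r \<psi>"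
    and orth_\<phi>: "second_moment \<rho>0 r \<phi> = 1\<^sub>m r" and orth_\<psi>: "second_moment \<rho>1 r \<psi> = 1\<^sub>m r"
    and T: "T \<in> carrier_mat r r" and S: "S \<in> carrier_mat r r"
    and eq: "\<And>x y. x \<in> space \<rho>0 \<Longrightarrow> y \<in> space \<rho>1 \<Longrightarrow> \<phi> x \<bullet> (T *\<^sub>v \<psi> y) = \<phi> x \<bullet> (S *\<^sub>v \<psi> y)"
  shows "T = S"
proof -
  have TS: "T *\<^sub>v \<psi> y = S *\<^sub>v \<psi> y" if y: "y \<in> space \<rho>1" for y
  proof -
    have \<psi>y: "\<psi> y \<in> carrier_vec r"
      using \<psi> y unfolding square_integrable_features_def by blast
    have "second_moment \<rho>0 r \<phi> *\<^sub>v (T *\<^sub>v \<psi> y) = cross_moment \<rho>0 r \<phi> \<phi> *\<^sub>v (S *\<^sub>v \<psi> y)"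
      using T S \<psi>y eq y by (intro second_moment_mult_vec_eq[OF \<phi> \<phi>]) auto
    then show ?thesis
      using T S \<psi>y orth_\<phi> by (simp add: second_moment_eq_cross_moment)
  qed
  have "cross_moment \<rho>1 r (\<lambda>y. S *\<^sub>v \<psi> y) \<psi> = T * second_moment \<rho>1 r \<psi>"
    using cross_moment_mult_mat_left[OF \<psi> \<psi> T] TS by (simp add: second_moment_eq_cross_moment)
  moreover have "cross_moment \<rho>1 r (\<lambda>y. S *\<^sub>v \<psi> y) \<psi> = S * second_moment \<rho>1 r \<psi>"
    using cross_moment_mult_mat_left[OF \<psi> \<psi> S] by (simp add: second_moment_eq_cross_moment)
  ultimately show ?thesis
    using T S orth_\<psi> by simp
qed

lemma factorization_through_orthonormal_features:
  fixes \<alpha> \<phi> \<beta> \<psi> :: "'a \<Rightarrow> real vec"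
  assumes \<alpha>: "square_integrable_features \<rho>0 r \<alpha>" and \<phi>: "square_integrable_features \<rho>0 r \<phi>"
    and \<beta>: "square_integrable_features \<rho>1 r \<beta>" and \<psi>: "square_integrable_features \<rho>1 r \<psi>"
    and orth_\<phi>: "second_moment \<rho>0 r \<phi> = 1\<^sub>m r" and orth_\<psi>: "second_moment \<rho>1 r \<psi> = 1\<^sub>m r"
    and inv0: "invertible_mat (second_moment \<rho>0 r \<alpha>)" and inv1: "invertible_mat (second_moment \<rho>1 r \<beta>)"
    and S: "S \<in> carrier_mat r r"
    and kernel: "\<And>x y. x \<in> space \<rho>0 \<Longrightarrow> y \<in> space \<rho>1 \<Longrightarrow> \<alpha> x \<bullet> \<beta> y = \<phi> x \<bullet> (S *\<^sub>v \<psi> y)"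
  obtains C D where "C \<in> carrier_mat r r" "D \<in> carrier_mat r r"
    "\<And>x. x \<in> space \<rho>0 \<Longrightarrow> \<alpha> x = C *\<^sub>v \<phi> x" "\<And>y. y \<in> space \<rho>1 \<Longrightarrow> \<beta> y = D *\<^sub>v \<psi> y"
    "second_moment \<rho>0 r \<alpha> = C * C\<^sup>T" "second_moment \<rho>1 r \<beta> = D * D\<^sup>T" "C\<^sup>T * D = S"
proof -
  have dim0: "\<alpha> x \<in> carrier_vec r" "\<phi> x \<in> carrier_vec r" if "x \<in> space \<rho>0" for x
    using \<alpha> \<phi> that unfolding square_integrable_features_def by auto
  have dim1: "\<beta> y \<in> carrier_vec r" "\<psi> y \<in> carrier_vec r" if "y \<in> space \<rho>1" for y
    using \<beta> \<psi> that unfolding square_integrable_features_def by auto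
  have "\<beta> y \<bullet> \<alpha> x = \<psi> y \<bullet> (S\<^sup>T *\<^sub>v \<phi> x)" if "x \<in> space \<rho>0" "y \<in> space \<rho>1" for x y
    using kernel[OF that] dim0[OF that(1)] dim1[OF that(2)] S
    by (simp add: comm_scalar_prod[of _ r] scalar_prod_mult_mat_vec_transpose[OF S])
  then obtain C where C: "C \<in> carrier_mat r r" and \<alpha>_eq: "\<And>x. x \<in> space \<rho>0 \<Longrightarrow> \<alpha> x = C *\<^sub>v \<phi> x"
    using feature_map_in_span[OF \<beta> \<psi> inv1, of "S\<^sup>T" "space \<rho>0" \<alpha> \<phi>] S dim0 by auto
  obtain D where D: "D \<in> carrier_mat r r" and \<beta>_eq: "\<And>y. y \<in> space \<rho>1 \<Longrightarrow> \<beta> y = D *\<^sub>v \<psi> y"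
    using feature_map_in_span[OF \<alpha> \<phi> inv0 S, of "space \<rho>1" \<beta> \<psi>] kernel dim1 by auto
  have "C\<^sup>T * D = S"
  proof (rule orthonormal_features_bilinear_unique[OF \<phi> \<psi> orth_\<phi> orth_\<psi> _ S])
    show "C\<^sup>T * D \<in> carrier_mat r r"
      using C D by simp
    fix x y assume "x \<in> space \<rho>0" "y \<in> space \<rho>1"
    then show "\<phi> x \<bullet> (C\<^sup>T * D *\<^sub>v \<psi> y) = \<phi> x \<bullet> (S *\<^sub>v \<psi> y)"
      using kernel \<alpha>_eq \<beta>_eq dim0 dim1 C D transpose_vec_mult_scalar[of "C\<^sup>T" r r "D *\<^sub>v \<psi> y" "\<phi> x"]
      by (simp add: assoc_mult_mat_vec[of _ r r _ r])
  qed
  then show thesis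
    using that C D \<alpha>_eq \<beta>_eq second_moment_orthonormal_expansion[OF \<alpha> \<phi> orth_\<phi> C \<alpha>_eq]
      second_moment_orthonormal_expansion[OF \<beta> \<psi> orth_\<psi> D \<beta>_eq] by blast
qed

lemma sqrt_moment_product_svd:
  fixes \<alpha> \<phi> \<beta> \<psi> :: "'a \<Rightarrow> real vec"
  assumes \<alpha>: "square_integrable_features \<rho>0 r \<alpha>" and \<phi>: "square_integrable_features \<rho>0 r \<phi>"
    and \<beta>: "square_integrable_features \<rho>1 r \<beta>" and \<psi>: "square_integrable_features \<rho>1 r \<psi>"
    and orth_\<phi>: "second_moment \<rho>0 r \<phi> = 1\<^sub>m r" and orth_\<psi>: "second_moment \<rho>1 r \<psi> = 1\<^sub>m r"
    and inv0: "invertible_mat (second_moment \<rho>0 r \<alpha>)" and inv1: "invertible_mat (second_moment \<rho>1 r \<beta>)"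
    and S: "S \<in> carrier_mat r r"
    and kernel: "\<And>x y. x \<in> space \<rho>0 \<Longrightarrow> y \<in> space \<rho>1 \<Longrightarrow> \<alpha> x \<bullet> \<beta> y = \<phi> x \<bullet> (S *\<^sub>v \<psi> y)"
  obtains U V where "orthogonal_real_mat r U" "orthogonal_real_mat r V"
    "S_sqrt \<rho>0 \<rho>1 r \<alpha> \<beta> = U * S * V\<^sup>T"
    "\<And>x. x \<in> space \<rho>0 \<Longrightarrow> U\<^sup>T *\<^sub>v (mat_inv_sqrt (second_moment \<rho>0 r \<alpha>) *\<^sub>v \<alpha> x) = \<phi> x"
    "\<And>y. y \<in> space \<rho>1 \<Longrightarrow> V\<^sup>T *\<^sub>v (mat_inv_sqrt (second_moment \<rho>1 r \<beta>) *\<^sub>v \<beta> y) = \<psi> y"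
proof -
  obtain C D where C: "C \<in> carrier_mat r r" and D: "D \<in> carrier_mat r r"
    and \<alpha>_eq: "\<And>x. x \<in> space \<rho>0 \<Longrightarrow> \<alpha> x = C *\<^sub>v \<phi> x" and \<beta>_eq: "\<And>y. y \<in> space \<rho>1 \<Longrightarrow> \<beta> y = D *\<^sub>v \<psi> y"
    and M0: "second_moment \<rho>0 r \<alpha> = C * C\<^sup>T" and M1: "second_moment \<rho>1 r \<beta> = D * D\<^sup>T"
    and CD: "C\<^sup>T * D = S"
    using factorization_through_orthonormal_features[OF \<alpha> \<phi> \<beta> \<psi> orth_\<phi> orth_\<psi> inv0 inv1 S kernel] by blast
  have inv_C: "invertible_mat (C * C\<^sup>T)" and inv_D: "invertible_mat (D * D\<^sup>T)"
    using inv0 inv1 by (simp_all add: M0 M1)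
  show thesis
  proof (rule that)
    show "orthogonal_real_mat r (mat_inv_sqrt (C * C\<^sup>T) * C)" "orthogonal_real_mat r (mat_inv_sqrt (D * D\<^sup>T) * D)"
      using polar_decomposition(2) C D inv_C inv_D by blast+
    show "S_sqrt \<rho>0 \<rho>1 r \<alpha> \<beta> = (mat_inv_sqrt (C * C\<^sup>T) * C) * S * (mat_inv_sqrt (D * D\<^sup>T) * D)\<^sup>T"
      unfolding S_sqrt_def M0 M1 CD[symmetric] by (rule mat_sqrt_gram_mult_svd[OF C D inv_C inv_D])
    show "(mat_inv_sqrt (C * C\<^sup>T) * C)\<^sup>T *\<^sub>v (mat_inv_sqrt (second_moment \<rho>0 r \<alpha>) *\<^sub>v \<alpha> x) = \<phi> x"
      if "x \<in> space \<rho>0" for x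
      unfolding M0 \<alpha>_eq[OF that] using \<phi> that unfolding square_integrable_features_def
      by (intro polar_decomposition_coordinates[OF C inv_C]) blast
    show "(mat_inv_sqrt (D * D\<^sup>T) * D)\<^sup>T *\<^sub>v (mat_inv_sqrt (second_moment \<rho>1 r \<beta>) *\<^sub>v \<beta> y) = \<psi> y"
      if "y \<in> space \<rho>1" for y
      unfolding M1 \<beta>_eq[OF that] using \<psi> that unfolding square_integrable_features_def
      by (intro polar_decomposition_coordinates[OF D inv_D]) blast
  qed
qed

section \<open>Singular functions of the Koopman operator\<close>

lemma koopman_adj_cong:
  "(\<And>x. x \<in> space \<rho> \<Longrightarrow> f x = g x) \<Longrightarrow> koopman_adj \<rho> k f x' = koopman_adj \<rho> k g x'"
  unfolding koopman_adj_def by (auto intro: Bochner_Integration.integral_cong)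

lemma koopman_cong:
  "(\<And>x'. x' \<in> space \<rho> \<Longrightarrow> f x' = g x') \<Longrightarrow> koopman \<rho> k f x = koopman \<rho> k g x"
  unfolding koopman_def by (auto intro: Bochner_Integration.integral_cong)

lemma koopman_adj_orthonormal_expansion:
  fixes \<phi> \<psi> :: "nat \<Rightarrow> 'a \<Rightarrow> real"
  assumes kernel: "\<And>x. x \<in> space \<rho> \<Longrightarrow> k x x' = (\<Sum>j<r. \<sigma> j * \<phi> j x * \<psi> j x')"
    and int: "\<And>i j. i < r \<Longrightarrow> j < r \<Longrightarrow> integrable \<rho> (\<lambda>x. \<phi> i x * \<phi> j x)"
    and orth: "\<And>i j. i < r \<Longrightarrow> j < r \<Longrightarrow> (\<integral>x. \<phi> i x * \<phi> j x \<partial>\<rho>) = (if i = j then 1 else 0)"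
    and i: "i < r"
  shows "koopman_adj \<rho> k (\<phi> i) x' = \<sigma> i * \<psi> i x'"
proof -
  have "koopman_adj \<rho> k (\<phi> i) x' = (\<integral>x. (\<Sum>j<r. (\<sigma> j * \<psi> j x') * (\<phi> j x * \<phi> i x)) \<partial>\<rho>)"
    unfolding koopman_adj_def
    by (intro Bochner_Integration.integral_cong) (simp_all add: kernel sum_distrib_left sum_distrib_right ac_simps)
  also have "\<dots> = (\<Sum>j<r. (\<sigma> j * \<psi> j x') * (if j = i then 1 else 0))"
    using int i by (simp add: Bochner_Integration.integral_sum orth)
  also have "\<dots> = \<sigma> i * \<psi> i x'"
    using i by (simp add: if_distrib cong: if_cong)
  finally show ?thesis .
qed

lemma koopman_orthonormal_expansion:
  fixes \<phi> \<psi> :: "nat \<Rightarrow> 'a \<Rightarrow> real"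
  assumes kernel: "\<And>x'. x' \<in> space \<rho> \<Longrightarrow> k x x' = (\<Sum>j<r. \<sigma> j * \<phi> j x * \<psi> j x')"
    and int: "\<And>i j. i < r \<Longrightarrow> j < r \<Longrightarrow> integrable \<rho> (\<lambda>x'. \<psi> i x' * \<psi> j x')"
    and orth: "\<And>i j. i < r \<Longrightarrow> j < r \<Longrightarrow> (\<integral>x'. \<psi> i x' * \<psi> j x' \<partial>\<rho>) = (if i = j then 1 else 0)"
    and i: "i < r"
  shows "koopman \<rho> k (\<psi> i) x = \<sigma> i * \<phi> i x"
proof -
  have "koopman \<rho> k (\<psi> i) x = koopman_adj \<rho> (\<lambda>x' x. k x x') (\<psi> i) x"
    by (simp add: koopman_def koopman_adj_def)
  also have "\<dots> = \<sigma> i * \<phi> i x"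
    using kernel int orth i by (intro koopman_adj_orthonormal_expansion) (simp_all add: ac_simps)
  finally show ?thesis .
qed

lemma koopman_singular_system:
  fixes \<phi> \<psi> :: "nat \<Rightarrow> 'a \<Rightarrow> real" and \<phi>' \<psi>' :: "'a \<Rightarrow> real vec"
  assumes kernel: "\<And>x x'. x \<in> space \<rho>0 \<Longrightarrow> x' \<in> space \<rho>1 \<Longrightarrow> k x x' = (\<Sum>j<r. \<sigma> j * \<phi> j x * \<psi> j x')"
    and meas_\<phi>: "\<And>i. i < r \<Longrightarrow> \<phi> i \<in> borel_measurable \<rho>0"
    and L2_\<phi>: "\<And>i. i < r \<Longrightarrow> integrable \<rho>0 (\<lambda>x. (\<phi> i x)\<^sup>2)"
    and meas_\<psi>: "\<And>i. i < r \<Longrightarrow> \<psi> i \<in> borel_measurable \<rho>1"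
    and L2_\<psi>: "\<And>i. i < r \<Longrightarrow> integrable \<rho>1 (\<lambda>x. (\<psi> i x)\<^sup>2)"
    and orth_\<phi>: "\<And>i j. i < r \<Longrightarrow> j < r \<Longrightarrow> (\<integral>x. \<phi> i x * \<phi> j x \<partial>\<rho>0) = (if i = j then 1 else 0)"
    and orth_\<psi>: "\<And>i j. i < r \<Longrightarrow> j < r \<Longrightarrow> (\<integral>x. \<psi> i x * \<psi> j x \<partial>\<rho>1) = (if i = j then 1 else 0)"
    and \<phi>': "\<And>x. x \<in> space \<rho>0 \<Longrightarrow> \<phi>' x = vec r (\<lambda>i. \<phi> i x)"
    and \<psi>': "\<And>x'. x' \<in> space \<rho>1 \<Longrightarrow> \<psi>' x' = vec r (\<lambda>i. \<psi> i x')"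
  shows "second_moment \<rho>0 r \<phi>' = 1\<^sub>m r" and "second_moment \<rho>1 r \<psi>' = 1\<^sub>m r"
    and "\<And>x x'. x \<in> space \<rho>0 \<Longrightarrow> x' \<in> space \<rho>1 \<Longrightarrow> k x x' = \<phi>' x \<bullet> (mat_diag r \<sigma> *\<^sub>v \<psi>' x')"
    and "\<And>i x'. i < r \<Longrightarrow> x' \<in> space \<rho>1 \<Longrightarrow> koopman_adj \<rho>0 k (\<lambda>x. vec_index (\<phi>' x) i) x' = \<sigma> i * vec_index (\<psi>' x') i"
    and "\<And>i x. i < r \<Longrightarrow> x \<in> space \<rho>0 \<Longrightarrow> koopman \<rho>1 k (\<lambda>x'. vec_index (\<psi>' x') i) x = \<sigma> i * vec_index (\<phi>' x) i"
proof -
  show "second_moment \<rho>0 r \<phi>' = 1\<^sub>m r" "second_moment \<rho>1 r \<psi>' = 1\<^sub>m r"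
    using second_moment_cong[of \<rho>0 \<phi>'] second_moment_cong[of \<rho>1 \<psi>'] \<phi>' \<psi>'
      second_moment_orthonormal_vec[OF orth_\<phi>] second_moment_orthonormal_vec[OF orth_\<psi>] by auto
  show "k x x' = \<phi>' x \<bullet> (mat_diag r \<sigma> *\<^sub>v \<psi>' x')" if "x \<in> space \<rho>0" "x' \<in> space \<rho>1" for x x'
    using that by (simp add: kernel \<phi>' \<psi>' mat_diag_mult_vec scalar_prod_def lessThan_atLeast0 ac_simps)
  show "koopman_adj \<rho>0 k (\<lambda>x. vec_index (\<phi>' x) i) x' = \<sigma> i * vec_index (\<psi>' x') i"
    if i: "i < r" and x': "x' \<in> space \<rho>1" for i x'
  proof -
    have "koopman_adj \<rho>0 k (\<lambda>x. vec_index (\<phi>' x) i) x' = koopman_adj \<rho>0 k (\<phi> i) x'"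
      using i by (intro koopman_adj_cong) (simp add: \<phi>')
    also have "\<dots> = \<sigma> i * \<psi> i x'"
      using kernel x' meas_\<phi> L2_\<phi> orth_\<phi> i
      by (intro koopman_adj_orthonormal_expansion integrable_mult_of_square_integrable) auto
    finally show ?thesis
      using i x' by (simp add: \<psi>')
  qed
  show "koopman \<rho>1 k (\<lambda>x'. vec_index (\<psi>' x') i) x = \<sigma> i * vec_index (\<phi>' x) i"
    if i: "i < r" and x: "x \<in> space \<rho>0" for i x
  proof -
    have "koopman \<rho>1 k (\<lambda>x'. vec_index (\<psi>' x') i) x = koopman \<rho>1 k (\<psi> i) x"
      using i by (intro koopman_cong) (simp add: \<psi>')
    also have "\<dots> = \<sigma> i * \<phi> i x"
      using kernel x meas_\<psi> L2_\<psi> orth_\<psi> i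
      by (intro koopman_orthonormal_expansion integrable_mult_of_square_integrable) auto
    finally show ?thesis
      using i x by (simp add: \<phi>')
  qed
qed

theorem theoremC1:
  fixes \<rho>0 \<rho>1 :: "(real ^ 'd) measure"
    and X :: "(real ^ 'd) set"
    and k :: "real ^ 'd \<Rightarrow> real ^ 'd \<Rightarrow> real"
    and r :: nat
    and \<alpha> \<beta> :: "real ^ 'd \<Rightarrow> real vec"
    and \<sigma> :: "nat \<Rightarrow> real"
    and \<phi>0 \<psi>0 :: "nat \<Rightarrow> real ^ 'd \<Rightarrow> real"
  assumes P0: "prob_space \<rho>0" and P1: "prob_space \<rho>1"
    and X0: "space \<rho>0 = X" and X1: "space \<rho>1 = X"
    and r_pos: "r \<ge> 1"
    and dim_\<alpha>: "\<And>x. x \<in> X \<Longrightarrow> \<alpha> x \<in> carrier_vec r"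
    and dim_\<beta>: "\<And>x. x \<in> X \<Longrightarrow> \<beta> x \<in> carrier_vec r"
    and meas_\<alpha>: "\<And>i. i < r \<Longrightarrow> (\<lambda>x. \<alpha> x $ i) \<in> borel_measurable \<rho>0"
    and L2_\<alpha>: "\<And>i. i < r \<Longrightarrow> integrable \<rho>0 (\<lambda>x. (\<alpha> x $ i)\<^sup>2)"
    and meas_\<beta>: "\<And>i. i < r \<Longrightarrow> (\<lambda>x. \<beta> x $ i) \<in> borel_measurable \<rho>1"
    and L2_\<beta>: "\<And>i. i < r \<Longrightarrow> integrable \<rho>1 (\<lambda>x. (\<beta> x $ i)\<^sup>2)"
    and factor: "\<And>x x'. x \<in> X \<Longrightarrow> x' \<in> X \<Longrightarrow> k x x' = \<alpha> x \<bullet> \<beta> x'"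
    and meas_\<phi>0: "\<And>i. i < r \<Longrightarrow> \<phi>0 i \<in> borel_measurable \<rho>0"
    and L2_\<phi>0: "\<And>i. i < r \<Longrightarrow> integrable \<rho>0 (\<lambda>x. (\<phi>0 i x)\<^sup>2)"
    and meas_\<psi>0: "\<And>i. i < r \<Longrightarrow> \<psi>0 i \<in> borel_measurable \<rho>1"
    and L2_\<psi>0: "\<And>i. i < r \<Longrightarrow> integrable \<rho>1 (\<lambda>x. (\<psi>0 i x)\<^sup>2)"
    and svd: "\<And>x x'. x \<in> X \<Longrightarrow> x' \<in> X \<Longrightarrow> k x x' = (\<Sum>i<r. \<sigma> i * \<phi>0 i x * \<psi>0 i x')"
    and orth_\<phi>0: "\<And>i j. i < r \<Longrightarrow> j < r \<Longrightarrow>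
        (\<integral>x. \<phi>0 i x * \<phi>0 j x \<partial>\<rho>0) = (if i = j then 1 else 0)"
    and orth_\<psi>0: "\<And>i j. i < r \<Longrightarrow> j < r \<Longrightarrow>
        (\<integral>x. \<psi>0 i x * \<psi>0 j x \<partial>\<rho>1) = (if i = j then 1 else 0)"
    and \<sigma>_first: "\<sigma> 0 = 1"
    and \<sigma>_mono: "\<And>i j. i \<le> j \<Longrightarrow> j < r \<Longrightarrow> \<sigma> j \<le> \<sigma> i"
    and \<sigma>_nonneg: "\<And>i. i < r \<Longrightarrow> 0 \<le> \<sigma> i"
    and inv_M0: "invertible_mat (second_moment \<rho>0 r \<alpha>)"
    and inv_M1: "invertible_mat (second_moment \<rho>1 r \<beta>)"
  shows "\<exists>U V. U \<in> carrier_mat r r \<and> V \<in> carrier_mat r r \<and>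
     transpose_mat U * U = 1\<^sub>m r \<and> transpose_mat V * V = 1\<^sub>m r \<and>
     S_sqrt \<rho>0 \<rho>1 r \<alpha> \<beta> = U * mat_diag r \<sigma> * transpose_mat V \<and>
     (let \<phi> = (\<lambda>x. transpose_mat U *\<^sub>v (mat_inv_sqrt (second_moment \<rho>0 r \<alpha>) *\<^sub>v \<alpha> x));
          \<psi> = (\<lambda>x'. transpose_mat V *\<^sub>v (mat_inv_sqrt (second_moment \<rho>1 r \<beta>) *\<^sub>v \<beta> x'))
      in second_moment \<rho>0 r \<phi> = 1\<^sub>m r \<and> second_moment \<rho>1 r \<psi> = 1\<^sub>m r \<and>
         (\<forall>x\<in>X. \<forall>x'\<in>X. k x x' = \<phi> x \<bullet> (mat_diag r \<sigma> *\<^sub>v \<psi> x')) \<and>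
         (\<forall>i<r. \<forall>x'\<in>X. koopman_adj \<rho>0 k (\<lambda>x. \<phi> x $ i) x' = \<sigma> i * \<psi> x' $ i) \<and>
         (\<forall>i<r. \<forall>x\<in>X. koopman \<rho>1 k (\<lambda>x'. \<psi> x' $ i) x = \<sigma> i * \<phi> x $ i))"
proof -
  define \<phi> where "\<phi> x = vec r (\<lambda>i. \<phi>0 i x)" for x
  define \<psi> where "\<psi> x = vec r (\<lambda>i. \<psi>0 i x)" for x
  note singular_system = koopman_singular_system[OF svd[unfolded X0[symmetric] X1[symmetric]]
      meas_\<phi>0 L2_\<phi>0 meas_\<psi>0 L2_\<psi>0 orth_\<phi>0 orth_\<psi>0]
  have \<alpha>: "square_integrable_features \<rho>0 r \<alpha>" and \<beta>: "square_integrable_features \<rho>1 r \<beta>"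
    using X0 X1 dim_\<alpha> dim_\<beta> meas_\<alpha> L2_\<alpha> meas_\<beta> L2_\<beta> by (auto simp: square_integrable_features_def)
  have \<phi>: "square_integrable_features \<rho>0 r \<phi>" and \<psi>: "square_integrable_features \<rho>1 r \<psi>"
    unfolding \<phi>_def \<psi>_def using meas_\<phi>0 L2_\<phi>0 meas_\<psi>0 L2_\<psi>0 by (auto intro!: square_integrable_features_vec)
  have kernel: "\<alpha> x \<bullet> \<beta> x' = \<phi> x \<bullet> (mat_diag r \<sigma> *\<^sub>v \<psi> x')" if "x \<in> space \<rho>0" "x' \<in> space \<rho>1" for x x'
    using that factor singular_system(3)[of \<phi> \<psi>] X0 X1 by (simp add: \<phi>_def \<psi>_def)
  obtain U V where U: "orthogonal_real_mat r U" and V: "orthogonal_real_mat r V"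
    and S: "S_sqrt \<rho>0 \<rho>1 r \<alpha> \<beta> = U * mat_diag r \<sigma> * V\<^sup>T"
    and \<phi>_eq: "\<And>x. x \<in> space \<rho>0 \<Longrightarrow> U\<^sup>T *\<^sub>v (mat_inv_sqrt (second_moment \<rho>0 r \<alpha>) *\<^sub>v \<alpha> x) = \<phi> x"
    and \<psi>_eq: "\<And>x'. x' \<in> space \<rho>1 \<Longrightarrow> V\<^sup>T *\<^sub>v (mat_inv_sqrt (second_moment \<rho>1 r \<beta>) *\<^sub>v \<beta> x') = \<psi> x'"
    using sqrt_moment_product_svd[OF \<alpha> \<phi> \<beta> \<psi> _ _ inv_M0 inv_M1 mat_diag_dim kernel]
      second_moment_orthonormal_vec[OF orth_\<phi>0] second_moment_orthonormal_vec[OF orth_\<psi>0]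
    unfolding \<phi>_def \<psi>_def by metis
  note singular = singular_system[of "\<lambda>x. U\<^sup>T *\<^sub>v (mat_inv_sqrt (second_moment \<rho>0 r \<alpha>) *\<^sub>v \<alpha> x)"
      "\<lambda>x'. V\<^sup>T *\<^sub>v (mat_inv_sqrt (second_moment \<rho>1 r \<beta>) *\<^sub>v \<beta> x')"]
  show ?thesis
    unfolding Let_def using U V S singular \<phi>_eq \<psi>_eq X0 X1
    by (intro exI[of _ U] exI[of _ V]) (auto simp: \<phi>_def \<psi>_def dest: orthogonal_real_matD)
qed

end
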